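(* Let $\varphi$ be an increasing concave function on $[0,\infty)$ with $\lim_{t\to0}\varphi(t)=0$ and let $1\le r<\infty$. Then the Lorentz space $\Lambda_r(\varphi)$ belongs to the class $\mathcal X$. In particular, $L(p,q)\in\mathcal X$ whenever $1<p<\infty$ and $1\le q\le p$.
   Context: All functions are measurable on $(0,\infty)$; $f^*$ denotes the nonincreasing rearrangement. A pair $(f,g)$ satisfies the NP condition if there is $t_0>0$ with $f^*(t)\ge g^*(t)$ for $t\le t_0$ and $f^*(t)\le g^*(t)$ for $t\ge t_0$. $\mathcal X$ is the class of all rearrangement invariant spaces $X$ on $(0,\infty)$ such that for every pair $(f,g)$ with $f,g\in X$ satisfying the NP condition and $\|f\|_X\ge\|g\|_X$, one has $\|f^*\chi_{(0,s)}\|_X\ge\|g^*\chi_{(0,s)}\|_X$ for all $s>0$. $\Lambda_r(\varphi)$ is the space of $f$ with $\|f\|_{\Lambda_r(\varphi)}=(\int_0^\infty f^*(t)^r\,d\varphi(t))^{1/r}<\infty$. $L(p,q)$ has norm $(\int_0^\infty f^*(t)^q\,d(t^{q/p}))^{1/q}$, i.e. $L(p,q)=\Lambda_q(t^{q/p})$ isometrically. *)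

theory Defs
  imports "HOL-Analysis.Analysis"
begin

text \<open>Real power on ennreal (exponent assumed positive): top stays top.\<close>
definition epow :: "ennreal \<Rightarrow> real \<Rightarrow> ennreal" where
  "epow x a = (if x = top then top else ennreal (enn2real x powr a))"

definition distf :: "(real \<Rightarrow> real) \<Rightarrow> real \<Rightarrow> ennreal" where
  "distf f y = emeasure lborel {t \<in> {0<..}. y < \<bar>f t\<bar>}"

text \<open>Nonincreasing rearrangement f*(t) = inf{lambda >= 0. d_f(lambda) <= t}
  (value top if the set is empty).\<close>
definition rearr :: "(real \<Rightarrow> real) \<Rightarrow> real \<Rightarrow> ennreal" where
  "rearr f t = Inf (ennreal ` {y. 0 \<le> y \<and> distf f y \<le> ennreal t})"

text \<open>A rearrangement invariant Banach function space on (0,infinity), given by its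
  function norm rho (X = measurable f with rho f finite); Bennett-Sharpley axioms.\<close>
definition ri_space :: "((real \<Rightarrow> real) \<Rightarrow> ennreal) \<Rightarrow> bool" where
  "ri_space \<rho> \<longleftrightarrow>
    (\<forall>f\<in>borel_measurable lborel. \<rho> f = 0 \<longleftrightarrow> (AE t in lborel. 0 < t \<longrightarrow> f t = 0))
  \<and> (\<forall>f\<in>borel_measurable lborel. \<forall>c::real. \<rho> (\<lambda>t. c * f t) = ennreal \<bar>c\<bar> * \<rho> f)
  \<and> (\<forall>f\<in>borel_measurable lborel. \<forall>g\<in>borel_measurable lborel.
        \<rho> (\<lambda>t. f t + g t) \<le> \<rho> f + \<rho> g)
  \<and> (\<forall>f\<in>borel_measurable lborel. \<forall>g\<in>borel_measurable lborel.
        (AE t in lborel. 0 < t \<longrightarrow> \<bar>g t\<bar> \<le> \<bar>f t\<bar>) \<longrightarrow> \<rho> g \<le> \<rho> f)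
  \<and> (\<forall>F f. (\<forall>n. F n \<in> borel_measurable lborel) \<and> f \<in> borel_measurable lborel \<and>
        (AE t in lborel. 0 < t \<longrightarrow> incseq (\<lambda>n. \<bar>F n t\<bar>) \<and> (\<lambda>n. \<bar>F n t\<bar>) \<longlonglongrightarrow> \<bar>f t\<bar>)
        \<longrightarrow> (\<lambda>n. \<rho> (F n)) \<longlonglongrightarrow> \<rho> f)
  \<and> (\<forall>E\<in>sets lborel. E \<subseteq> {0<..} \<and> emeasure lborel E < top \<longrightarrow>
        \<rho> (indicator E) < top \<and>
        (\<exists>C::real. \<forall>f\<in>borel_measurable lborel.
            (\<integral>\<^sup>+t\<in>E. ennreal \<bar>f t\<bar> \<partial>lborel) \<le> ennreal C * \<rho> f))
  \<and> (\<forall>f\<in>borel_measurable lborel. \<forall>g\<in>borel_measurable lborel.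
        (\<forall>y\<ge>0. distf f y = distf g y) \<longrightarrow> \<rho> f = \<rho> g)"

definition NP :: "(real \<Rightarrow> real) \<Rightarrow> (real \<Rightarrow> real) \<Rightarrow> bool" where
  "NP f g \<longleftrightarrow> (\<exists>t0>0. (\<forall>t. 0 < t \<and> t \<le> t0 \<longrightarrow> rearr g t \<le> rearr f t)
                     \<and> (\<forall>t\<ge>t0. rearr f t \<le> rearr g t))"

definition trunc_rearr :: "(real \<Rightarrow> real) \<Rightarrow> real \<Rightarrow> real \<Rightarrow> real" where
  "trunc_rearr f s = (\<lambda>t. enn2real (rearr f t) * indicator {0<..<s} t)"

definition in_class_X :: "((real \<Rightarrow> real) \<Rightarrow> ennreal) \<Rightarrow> bool" where
  "in_class_X \<rho> \<longleftrightarrow> ri_space \<rho> \<and>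
    (\<forall>f\<in>borel_measurable lborel. \<forall>g\<in>borel_measurable lborel.
       \<rho> f < top \<and> \<rho> g < top \<and> NP f g \<and> \<rho> g \<le> \<rho> f \<longrightarrow>
       (\<forall>s>0. \<rho> (trunc_rearr g s) \<le> \<rho> (trunc_rearr f s)))"

definition stieltjes :: "(real \<Rightarrow> real) \<Rightarrow> real measure" where
  "stieltjes \<phi> = interval_measure (\<lambda>t. if t \<le> 0 then 0 else \<phi> t)"

definition lorentz_norm :: "(real \<Rightarrow> real) \<Rightarrow> real \<Rightarrow> (real \<Rightarrow> real) \<Rightarrow> ennreal" where
  "lorentz_norm \<phi> r f = epow (\<integral>\<^sup>+t. epow (rearr f t) r \<partial>stieltjes \<phi>) (1 / r)"

definition Lpq_norm :: "real \<Rightarrow> real \<Rightarrow> (real \<Rightarrow> real) \<Rightarrow> ennreal" where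
  "Lpq_norm p q f = epow (\<integral>\<^sup>+t. epow (rearr f t) q \<partial>stieltjes (\<lambda>t. t powr (q / p))) (1 / q)"

end

theory Submission
  imports Defs
begin

(*
  Write nu for the Stieltjes measure d phi and d_u for the distribution function of u on
  (0, infinity). The layer cake formula turns ||f||^r, the nu-integral of the r-th power
  of f^*, into the Choquet integral int_0^infinity phi(d_v(lambda)) d lambda of v = |f|^r.
  For the weight min(., s) this is int_0^s v^*, which is subadditive in v because it is
  the minimum over a >= 0 of a s + int (|v| - a)^+. A concave phi is the pointwise limit
  of its piecewise linear interpolants, nonnegative combinations of such minima, so by
  Fatou's lemma the Choquet integral is subadditive, and convexity of x^r gives the
  triangle inequality for the norm. The class X property only uses the integral form of
  the norm and the NP condition; L(p,q) is the weight phi(t) = t^(q/p), concave as q <= p.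
*)

section \<open>Distribution functions and rearrangements\<close>

lemma emeasure_lborel_Ioi_0: "emeasure lborel {0::real<..} = top"
proof -
  have "of_nat n \<le> emeasure lborel {0::real<..}" for n
  proof -
    have "emeasure lborel {0::real<..<real n} \<le> emeasure lborel {0::real<..}"
      by (rule emeasure_mono) auto
    then show ?thesis by (simp add: ennreal_of_nat_eq_real_of_nat)
  qed
  then have "(SUP n. of_nat n) \<le> emeasure lborel {0::real<..}"
    by (intro SUP_least)
  then show ?thesis by (simp add: ennreal_SUP_of_nat_eq_top top_unique)
qed

lemma emeasure_lborel_below_ennreal: "emeasure lborel {l::real. 0 < l \<and> ennreal l < x} = x"
proof (cases "x = top")
  case True
  then have "{l::real. 0 < l \<and> ennreal l < x} = {0<..}" by auto
  then show ?thesis using True by (simp add: emeasure_lborel_Ioi_0)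
next
  case False
  then obtain a where a: "x = ennreal a" "0 \<le> a" by (cases x) auto
  then have "{l::real. 0 < l \<and> ennreal l < x} = {0<..<a}"
    by (auto simp: ennreal_less_iff)
  then show ?thesis using a by simp
qed

lemma nn_integral_layer_cake:
  assumes "sigma_finite_measure M" and [measurable]: "h \<in> borel_measurable M"
  shows "(\<integral>\<^sup>+x. h x \<partial>M) =
    (\<integral>\<^sup>+l. indicator {0<..} l * emeasure M {x\<in>space M. ennreal l < h x} \<partial>lborel)"
proof -
  interpret M: sigma_finite_measure M by fact
  interpret pair_sigma_finite M lborel
    by (simp add: M.sigma_finite_measure_axioms lborel.sigma_finite_measure_axioms pair_sigma_finite.intro)
  let ?I = "\<lambda>x l. indicator {0<..} l * indicator {l. ennreal l < h x} l :: ennreal"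
  have "h x = (\<integral>\<^sup>+l. ?I x l \<partial>lborel)" for x
  proof -
    have "(\<integral>\<^sup>+l. ?I x l \<partial>lborel) = (\<integral>\<^sup>+l. indicator {l. 0 < l \<and> ennreal l < h x} l \<partial>lborel)"
      by (intro nn_integral_cong) (auto split: split_indicator)
    then show ?thesis by (simp add: emeasure_lborel_below_ennreal)
  qed
  then have "(\<integral>\<^sup>+x. h x \<partial>M) = (\<integral>\<^sup>+x. (\<integral>\<^sup>+l. ?I x l \<partial>lborel) \<partial>M)"
    by simp
  also have "\<dots> = (\<integral>\<^sup>+l. (\<integral>\<^sup>+x. ?I x l \<partial>M) \<partial>lborel)"
    by (rule Fubini'[symmetric]) measurable
  also have "\<dots> = (\<integral>\<^sup>+l. indicator {0<..} l * emeasure M {x\<in>space M. ennreal l < h x} \<partial>lborel)"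
  proof (rule nn_integral_cong)
    fix l
    have "(\<integral>\<^sup>+x. ?I x l \<partial>M) = (\<integral>\<^sup>+x. indicator {0<..} l * indicator {x\<in>space M. ennreal l < h x} x \<partial>M)"
      by (rule nn_integral_cong) (auto split: split_indicator)
    also have "\<dots> = indicator {0<..} l * emeasure M {x\<in>space M. ennreal l < h x}"
      by (subst nn_integral_cmult) auto
    finally show "(\<integral>\<^sup>+x. ?I x l \<partial>M) = indicator {0<..} l * emeasure M {x\<in>space M. ennreal l < h x}" .
  qed
  finally show ?thesis .
qed

lemma down_closed_sets_borel:
  fixes S :: "real set"
  assumes down_closed: "\<And>x x'. x' \<le> x \<Longrightarrow> x \<in> S \<Longrightarrow> x' \<in> S"
  shows "S \<in> sets borel"
proof (cases "S = UNIV \<or> S = {}")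
  case False
  then obtain x0 where x0: "x0 \<notin> S" and ne: "S \<noteq> {}" by auto
  have bdd: "bdd_above S"
    using down_closed[of x0] x0 by (metis bdd_aboveI linorder_le_cases)
  define s where "s = Sup S"
  have "x \<le> s" if "x \<in> S" for x
    unfolding s_def using bdd that by (intro cSup_upper)
  moreover have "x \<in> S" if "x < s" for x
  proof -
    obtain y where "y \<in> S" "x < y" using \<open>x < s\<close> less_cSup_iff[OF ne bdd] by (auto simp: s_def)
    then show "x \<in> S" using down_closed[of x y] by auto
  qed
  ultimately have "S = {..<s} \<union> (S \<inter> {s})"
    by (auto simp: order.order_iff_strict)
  moreover have "S \<inter> {s} \<in> sets borel"
    by (cases "s \<in> S") auto
  ultimately show ?thesis by (metis sets.Un lessThan_borel)
qed auto

lemma antimono_borel_measurable: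
  fixes g :: "real \<Rightarrow> 'b::{linorder_topology, second_countable_topology}"
  assumes "\<And>x y. x \<le> y \<Longrightarrow> g y \<le> g x"
  shows "g \<in> borel_measurable borel"
proof (rule borel_measurableI_greater)
  fix y
  have "{x. y < g x} \<in> sets borel"
    by (rule down_closed_sets_borel) (use assms in \<open>auto intro: less_le_trans\<close>)
  then show "{x \<in> space borel. y < g x} \<in> sets borel" by simp
qed

lemma distf_antimono:
  assumes [measurable]: "f \<in> borel_measurable borel" and "y \<le> y'"
  shows "distf f y' \<le> distf f y"
  unfolding distf_def using assms(2) by (intro emeasure_mono) auto

lemma distf_measurable[measurable]:
  assumes [measurable]: "u \<in> borel_measurable borel"
  shows "distf u \<in> borel_measurable borel"
  by (rule antimono_borel_measurable) (intro distf_antimono assms)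

lemma distf_eq_SUP:
  assumes [measurable]: "f \<in> borel_measurable borel"
  shows "distf f y = (SUP n. distf f (y + inverse (real (Suc n))))"
proof -
  let ?A = "\<lambda>n. {t\<in>{0<..}. y + inverse (real (Suc n)) < \<bar>f t\<bar>}"
  have "incseq ?A"
  proof (rule incseq_SucI, safe)
    fix n t assume "y + inverse (real (Suc n)) < \<bar>f t\<bar>"
    moreover have "inverse (real (Suc (Suc n))) \<le> inverse (real (Suc n))"
      by (simp add: field_simps)
    ultimately show "y + inverse (real (Suc (Suc n))) < \<bar>f t\<bar>" by linarith
  qed
  then have "(SUP n. emeasure lborel (?A n)) = emeasure lborel (\<Union>n. ?A n)"
    by (intro SUP_emeasure_incseq) auto
  moreover have "(\<Union>n. ?A n) = {t\<in>{0<..}. y < \<bar>f t\<bar>}"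
  proof safe
    fix t n assume "y + inverse (real (Suc n)) < \<bar>f t\<bar>"
    moreover have "0 < inverse (real (Suc n))" by simp
    ultimately show "y < \<bar>f t\<bar>" by linarith
  next
    fix t :: real assume t: "0 < t" "y < \<bar>f t\<bar>"
    then obtain n where "inverse (real (Suc n)) < \<bar>f t\<bar> - y"
      using reals_Archimedean[of "\<bar>f t\<bar> - y"] by auto
    then have "y + inverse (real (Suc n)) < \<bar>f t\<bar>" by linarith
    then show "t \<in> (\<Union>n. ?A n)" using t by blast
  qed
  ultimately show ?thesis unfolding distf_def by simp
qed

lemma rearr_le_iff:
  assumes [measurable]: "f \<in> borel_measurable borel" and "0 \<le> t" and "0 \<le> y"
  shows "rearr f t \<le> ennreal y \<longleftrightarrow> distf f y \<le> ennreal t"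
proof
  assume "distf f y \<le> ennreal t"
  then show "rearr f t \<le> ennreal y"
    unfolding rearr_def using \<open>0 \<le> y\<close> by (intro Inf_lower) auto
next
  assume le: "rearr f t \<le> ennreal y"
  have "distf f (y + inverse (real (Suc n))) \<le> ennreal t" for n
  proof -
    have "ennreal y < ennreal (y + inverse (real (Suc n)))"
      using \<open>0 \<le> y\<close> by (subst ennreal_less_iff) auto
    with le obtain y' where y': "0 \<le> y'" "distf f y' \<le> ennreal t"
        "ennreal y' < ennreal (y + inverse (real (Suc n)))"
      unfolding rearr_def Inf_le_iff by blast
    then have "distf f (y + inverse (real (Suc n))) \<le> distf f y'"
      by (intro distf_antimono) (auto simp: ennreal_less_iff)
    with y' show ?thesis by simp
  qed
  then show "distf f y \<le> ennreal t"
    by (subst distf_eq_SUP) (auto intro: SUP_least)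
qed

lemma rearr_less_iff:
  assumes "f \<in> borel_measurable borel" and "0 \<le> t" and "0 \<le> y"
  shows "ennreal y < rearr f t \<longleftrightarrow> ennreal t < distf f y"
  using rearr_le_iff[OF assms] by (simp add: not_le[symmetric])

lemma rearr_antimono: "t \<le> t' \<Longrightarrow> rearr f t' \<le> rearr f t"
  unfolding rearr_def
  by (intro Inf_superset_mono image_mono) (auto intro: order_trans ennreal_leI)

lemma distf_mono_AE:
  assumes [measurable]: "u \<in> borel_measurable borel" "v \<in> borel_measurable borel"
    and "AE t in lborel. 0 < t \<longrightarrow> \<bar>u t\<bar> \<le> \<bar>v t\<bar>"
  shows "distf u l \<le> distf v l"
  unfolding distf_def
  by (rule emeasure_mono_AE) (use assms(3) in \<open>auto elim!: eventually_mono\<close>)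

lemma distf_cong_AE:
  assumes "u \<in> borel_measurable borel" "v \<in> borel_measurable borel"
    and "AE t in lborel. 0 < t \<longrightarrow> \<bar>u t\<bar> = \<bar>v t\<bar>"
  shows "distf u l = distf v l"
  using assms(3) by (intro antisym distf_mono_AE assms) (auto elim!: eventually_mono)

lemma distf_cmult:
  assumes "0 < c"
  shows "distf (\<lambda>t. c * u t) l = distf u (l / c)"
proof -
  have "{t\<in>{0<..}. l < \<bar>c * u t\<bar>} = {t\<in>{0<..}. l / c < \<bar>u t\<bar>}"
    using assms by (auto simp: abs_mult field_simps)
  then show ?thesis unfolding distf_def by simp
qed

lemma distf_powr:
  assumes "0 < r" and "0 < l"
  shows "distf u (l powr (1/r)) = distf (\<lambda>t. \<bar>u t\<bar> powr r) l"
proof -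
  have "l powr (1/r) < x \<longleftrightarrow> l < x powr r" if "0 \<le> x" for x
    using assms that powr_less_mono2[of "1/r" l "x powr r"] powr_less_mono2[of r "l powr (1/r)" x]
    by (auto simp: powr_powr)
  then show ?thesis unfolding distf_def by simp
qed

lemma distf_eq_0_AE:
  assumes [measurable]: "u \<in> borel_measurable borel"
    and "AE t in lborel. 0 < t \<longrightarrow> u t = 0" and "0 \<le> l"
  shows "distf u l = 0"
proof -
  have "distf u l \<le> distf (\<lambda>_. 0) l"
    using assms(2) by (intro distf_mono_AE) (auto elim!: eventually_mono)
  also have "distf (\<lambda>_. 0) l = 0" using \<open>0 \<le> l\<close> by (simp add: distf_def)
  finally show ?thesis by simp
qed

lemma AE_eq_0_if_distf_eq_0:
  assumes [measurable]: "u \<in> borel_measurable borel"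
    and "\<And>l. 0 < l \<Longrightarrow> distf u l = 0"
  shows "AE t in lborel. 0 < t \<longrightarrow> u t = 0"
proof -
  have "AE t in lborel. 0 < t \<longrightarrow> \<bar>u t\<bar> \<le> inverse (real (Suc n))" for n
    using assms(2)[of "inverse (real (Suc n))"]
    by (subst AE_iff_measurable[of "{t\<in>{0<..}. inverse (real (Suc n)) < \<bar>u t\<bar>}"])
       (auto simp: distf_def)
  then have "AE t in lborel. \<forall>n. 0 < t \<longrightarrow> \<bar>u t\<bar> \<le> inverse (real (Suc n))"
    by (subst AE_all_countable) auto
  then show ?thesis
  proof (rule eventually_mono, intro impI)
    fix t assume "\<forall>n. 0 < t \<longrightarrow> \<bar>u t\<bar> \<le> inverse (real (Suc n))" and "0 < t"
    then show "u t = 0"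
      using reals_Archimedean[of "\<bar>u t\<bar>"] by (metis abs_ge_zero antisym not_le zero_less_abs_iff)
  qed
qed

lemma distf_incseq_limit:
  assumes [measurable]: "\<And>n. U n \<in> borel_measurable borel" "u \<in> borel_measurable borel"
    and lim: "AE t in lborel. 0 < t \<longrightarrow> incseq (\<lambda>n. \<bar>U n t\<bar>) \<and> (\<lambda>n. \<bar>U n t\<bar>) \<longlonglongrightarrow> \<bar>u t\<bar>"
  shows "distf u l = (SUP n. distf (U n) l)"
proof -
  let ?A = "\<lambda>n. {t\<in>{0<..}. l < \<bar>U n t\<bar>}"
  have ind: "AE t in lborel. indicator {t\<in>{0<..}. l < \<bar>u t\<bar>} t = (SUP n. indicator (?A n) t :: ennreal)"
    using lim
  proof eventually_elim
    case (elim t)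
    show ?case
    proof (cases "0 < t \<and> l < \<bar>u t\<bar>")
      case True
      with elim have "\<forall>\<^sub>F n in sequentially. l < \<bar>U n t\<bar>"
        using order_tendstoD(1) by blast
      then obtain n where "t \<in> ?A n" using True by (auto dest: eventually_happens)
      then have "1 \<le> (SUP n. indicator (?A n) t :: ennreal)"
        by (intro SUP_upper2[of n]) auto
      moreover have "(SUP n. indicator (?A n) t :: ennreal) \<le> 1"
        by (intro SUP_least) (auto split: split_indicator)
      ultimately show ?thesis using True by auto
    next
      case False
      have "t \<notin> ?A n" for n
        using False elim incseq_le[of "\<lambda>n. \<bar>U n t\<bar>" "\<bar>u t\<bar>" n] by auto
      then show ?thesis using False by auto
    qed
  qed
  have "distf u l = (\<integral>\<^sup>+t. indicator {t\<in>{0<..}. l < \<bar>u t\<bar>} t \<partial>lborel)"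
    by (simp add: distf_def)
  also have "\<dots> = (\<integral>\<^sup>+t. (SUP n. indicator (?A n) t) \<partial>lborel)"
    using ind by (rule nn_integral_cong_AE)
  also have "\<dots> = (SUP n. \<integral>\<^sup>+t. indicator (?A n) t \<partial>lborel)"
  proof (rule nn_integral_monotone_convergence_SUP_AE)
    show "AE t in lborel. indicator (?A n) t \<le> (indicator (?A (Suc n)) t :: ennreal)" for n
      using lim by eventually_elim (auto simp: incseq_Suc_iff split: split_indicator, meson less_le_trans)
  qed measurable
  finally show ?thesis unfolding distf_def by simp
qed

lemma epow_top[simp]: "epow top a = top"
  by (simp add: epow_def)

lemma epow_ennreal[simp]: "0 \<le> x \<Longrightarrow> epow (ennreal x) a = ennreal (x powr a)"
  by (simp add: epow_def)

lemma epow_0[simp]: "epow 0 a = 0"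
  by (simp add: epow_def)

lemma powr_less_iff_root_less:
  fixes s t a :: real
  assumes "0 < a" and "0 \<le> s" and "0 \<le> t"
  shows "s < t powr a \<longleftrightarrow> s powr (1/a) < t"
  using assms powr_less_mono2[of "1/a" s "t powr a"] powr_less_mono2[of a "s powr (1/a)" t]
  by (auto simp: powr_powr)

lemma epow_less_iff:
  assumes "0 < a"
  shows "c < epow x a \<longleftrightarrow> epow c (1/a) < x"
  using assms by (cases c; cases x) (auto simp: ennreal_less_iff powr_less_iff_root_less)

lemma epow_le_iff:
  assumes "0 < a"
  shows "epow x a \<le> c \<longleftrightarrow> x \<le> epow c (1/a)"
  using epow_less_iff[OF assms, of c x] by (simp add: not_less[symmetric])

lemma epow_epow:
  assumes "0 < a" shows "epow (epow x a) (1/a) = x"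
  using assms by (cases x) (auto simp: powr_powr)

lemma epow_mono:
  assumes "0 \<le> a" "x \<le> y" shows "epow x a \<le> epow y a"
  using assms by (cases x; cases y) (auto simp: powr_mono2 top_unique)

lemma epow_le_epow_iff:
  assumes "0 < a" shows "epow x a \<le> epow y a \<longleftrightarrow> x \<le> y"
  using epow_le_iff[OF assms, of x "epow y a"] epow_epow[OF assms, of y] by simp

lemma epow_less_top_iff:
  assumes "0 < a" shows "epow x a < top \<longleftrightarrow> x < top"
  by (cases x) auto

lemma epow_eq_0_iff:
  assumes "0 < a" shows "epow x a = 0 \<longleftrightarrow> x = 0"
  using assms by (cases x) auto

lemma epow_mult:
  assumes "0 < a" and "0 \<le> c"
  shows "epow (ennreal c * x) a = ennreal (c powr a) * epow x a"
  using assms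
  by (cases x; cases "c = 0") (auto simp: ennreal_mult_top ennreal_mult[symmetric] powr_mult)

lemma epow_tendsto:
  assumes "0 < a" and X: "X \<longlonglongrightarrow> A"
  shows "(\<lambda>n. epow (X n) a) \<longlonglongrightarrow> epow A a"
proof (rule order_tendstoI)
  fix c assume "c < epow A a"
  then have "\<forall>\<^sub>F n in sequentially. epow c (1/a) < X n"
    using order_tendstoD(1)[OF X] epow_less_iff[OF \<open>0 < a\<close>] by auto
  then show "\<forall>\<^sub>F n in sequentially. c < epow (X n) a"
    by eventually_elim (simp add: epow_less_iff[OF \<open>0 < a\<close>])
next
  fix c assume "epow A a < c"
  then have "\<forall>\<^sub>F n in sequentially. X n < epow c (1/a)"
    using order_tendstoD(2)[OF X] epow_less_iff[of "1/a" A c] \<open>0 < a\<close> by auto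
  then show "\<forall>\<^sub>F n in sequentially. epow (X n) a < c"
    by eventually_elim (use epow_less_iff[of "1/a" _ c] \<open>0 < a\<close> in simp)
qed

lemma rearr_epow_measurable:
  assumes "0 \<le> r" shows "(\<lambda>t. epow (rearr f t) r) \<in> borel_measurable borel"
  by (rule antimono_borel_measurable) (intro epow_mono assms rearr_antimono)

section \<open>Concave weights and the Choquet integral\<close>

locale lorentz_weight =
  fixes \<phi> :: "real \<Rightarrow> real"
  assumes strict_mono: "strict_mono_on {0..} \<phi>"
    and concave: "concave_on {0..} \<phi>"
    and tendsto_0: "(\<phi> \<longlongrightarrow> 0) (at_right 0)"
begin

abbreviation \<nu> :: "real measure" where "\<nu> \<equiv> stieltjes \<phi>"

definition \<phi>\<^sub>0 :: "real \<Rightarrow> real" where "\<phi>\<^sub>0 t = (if t \<le> 0 then 0 else \<phi> t)"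

lemma phi_less: "0 \<le> x \<Longrightarrow> x < y \<Longrightarrow> \<phi> x < \<phi> y"
  using strict_mono by (auto intro: strict_mono_onD)

lemma phi_mono: "0 \<le> x \<Longrightarrow> x \<le> y \<Longrightarrow> \<phi> x \<le> \<phi> y"
  using phi_less by (cases "x = y") (auto simp: le_less)

lemma phi_pos:
  assumes "0 < t" shows "0 < \<phi> t"
proof -
  have "\<forall>\<^sub>F s in at_right 0. \<phi> s \<le> \<phi> (t/2)"
    using assms unfolding eventually_at_right_field
    by (intro exI[of _ "t/2"]) (auto intro: phi_mono)
  from tendsto_upperbound[OF tendsto_0 this] have "0 \<le> \<phi> (t/2)" by simp
  with phi_less[of "t/2" t] assms show ?thesis by auto
qed

lemma continuous_on_phi: "continuous_on {0<..} \<phi>"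
proof -
  have "concave_on {0<..} \<phi>"
    using concave unfolding concave_on_def by (rule convex_on_subset) auto
  then have "continuous_on {0<..} (\<lambda>x. - \<phi> x)"
    unfolding concave_on_def by (intro convex_on_continuous) auto
  from continuous_on_minus[OF this] show ?thesis by simp
qed

lemma phi0_nonneg: "0 \<le> \<phi>\<^sub>0 t"
  using phi_pos by (auto simp: \<phi>\<^sub>0_def less_imp_le)

lemma phi0_mono: "x \<le> y \<Longrightarrow> \<phi>\<^sub>0 x \<le> \<phi>\<^sub>0 y"
  using phi_pos phi_mono by (auto simp: \<phi>\<^sub>0_def less_imp_le)

lemma phi0_pos: "0 < t \<Longrightarrow> 0 < \<phi>\<^sub>0 t"
  using phi_pos by (auto simp: \<phi>\<^sub>0_def)

lemma isCont_phi0: "isCont \<phi>\<^sub>0 x"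
proof -
  consider "x < 0" | "x = 0" | "0 < x" by linarith
  then show ?thesis
  proof cases
    case 1
    have "\<forall>\<^sub>F y in nhds x. \<phi>\<^sub>0 y = 0"
      using eventually_nhds_in_open[of "{..<0}" x] 1 by (auto elim!: eventually_mono simp: \<phi>\<^sub>0_def)
    then show ?thesis by (simp add: isCont_cong)
  next
    case 2
    have "\<forall>\<^sub>F y in at_left 0. \<phi>\<^sub>0 y = 0"
      unfolding eventually_at_left_field by (intro exI[of _ "-1"]) (auto simp: \<phi>\<^sub>0_def)
    then have "(\<phi>\<^sub>0 \<longlongrightarrow> 0) (at_left 0)"
      by (intro tendsto_eventually)
    moreover have "\<forall>\<^sub>F y in at_right 0. \<phi> y = \<phi>\<^sub>0 y"
      unfolding eventually_at_right_field by (intro exI[of _ 1]) (auto simp: \<phi>\<^sub>0_def)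
    then have "(\<phi>\<^sub>0 \<longlongrightarrow> 0) (at_right 0)"
      by (rule Lim_transform_eventually[OF tendsto_0])
    ultimately have "(\<phi>\<^sub>0 \<longlongrightarrow> 0) (at 0)"
      by (rule filterlim_split_at)
    then show ?thesis
      using 2 by (simp add: isCont_def \<phi>\<^sub>0_def)
  next
    case 3
    have "\<forall>\<^sub>F y in nhds x. \<phi>\<^sub>0 y = \<phi> y"
      using eventually_nhds_in_open[of "{0<..}" x] 3 by (auto elim!: eventually_mono simp: \<phi>\<^sub>0_def)
    moreover have "isCont \<phi> x"
      using continuous_on_phi 3 by (simp add: continuous_on_eq_continuous_at)
    ultimately show ?thesis by (simp add: isCont_cong)
  qed
qed

lemma continuous_on_phi0: "continuous_on UNIV \<phi>\<^sub>0"
  using isCont_phi0 by (simp add: continuous_at_imp_continuous_on)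

lemma nu_eq_interval_measure: "\<nu> = interval_measure \<phi>\<^sub>0"
  by (simp add: stieltjes_def \<phi>\<^sub>0_def[abs_def])

lemma sets_nu[simp, measurable_cong]: "sets \<nu> = sets borel"
  by (simp add: nu_eq_interval_measure)

lemma space_nu[simp]: "space \<nu> = UNIV"
  by (simp add: nu_eq_interval_measure)

lemma borel_measurable_nu: "borel_measurable \<nu> = borel_measurable borel"
  by (rule measurable_cong_sets) auto

lemma sigma_finite_nu: "sigma_finite_measure \<nu>"
  unfolding nu_eq_interval_measure
  by (rule sigma_finite_interval_measure) (auto intro: phi0_mono isCont_phi0 continuous_at_imp_continuous_within)

lemma emeasure_nu_Ioc: "a \<le> b \<Longrightarrow> emeasure \<nu> {a<..b} = ennreal (\<phi>\<^sub>0 b - \<phi>\<^sub>0 a)"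
  unfolding nu_eq_interval_measure
  by (rule emeasure_interval_measure_Ioc) (auto intro: phi0_mono isCont_phi0 continuous_at_imp_continuous_within)

lemma emeasure_nu_Icc: "a \<le> b \<Longrightarrow> emeasure \<nu> {a..b} = ennreal (\<phi>\<^sub>0 b - \<phi>\<^sub>0 a)"
  unfolding nu_eq_interval_measure
  by (rule emeasure_interval_measure_Icc) (auto intro: phi0_mono continuous_on_phi0)

lemma AE_nu_pos: "AE t in \<nu>. 0 < t"
proof -
  have "emeasure \<nu> (\<Union>n. {- real n..0}) = 0"
    by (rule emeasure_UN_eq_0) (auto simp: emeasure_nu_Icc \<phi>\<^sub>0_def)
  moreover have "{..0::real} \<subseteq> (\<Union>n. {- real n..0})"
    using real_arch_simple by (fastforce simp: minus_le_iff)
  ultimately show ?thesis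
    by (intro AE_I'[of "\<Union>n. {- real n..0}"]) (auto simp: null_sets_def not_less)
qed

lemma emeasure_nu_restrict_pos:
  assumes [measurable]: "A \<in> sets borel"
  shows "emeasure \<nu> A = emeasure \<nu> {t\<in>A. 0 < t}"
  by (rule emeasure_eq_AE) (use AE_nu_pos in \<open>auto elim!: eventually_mono\<close>)

text \<open>\<open>\<Phi>\<close> extends \<open>\<phi>\<^sub>0\<close> to \<open>[0, \<infinity>]\<close>, lower semicontinuously.\<close>
definition \<Phi> :: "ennreal \<Rightarrow> ennreal" where
  "\<Phi> x = emeasure \<nu> {t. 0 < t \<and> ennreal t < x}"

lemma Phi_ennreal:
  assumes "0 \<le> y" shows "\<Phi> (ennreal y) = ennreal (\<phi>\<^sub>0 y)"
proof (cases "y = 0")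
  case True
  then show ?thesis by (simp add: \<Phi>_def \<phi>\<^sub>0_def)
next
  case False
  with assms have y: "0 < y" by auto
  have "emeasure \<nu> {0<..y} = emeasure \<nu> ({0<..<y} \<union> {y})"
    using y by (intro arg_cong[where f="emeasure _"]) auto
  also have "\<dots> = emeasure \<nu> {0<..<y} + emeasure \<nu> {y}"
    by (rule plus_emeasure[symmetric]) auto
  also have "emeasure \<nu> {y} = 0"
    using emeasure_nu_Icc[of y y] by simp
  finally have "emeasure \<nu> {0<..<y} = ennreal (\<phi>\<^sub>0 y)"
    using y by (simp add: emeasure_nu_Ioc \<phi>\<^sub>0_def)
  moreover have "{t. 0 < t \<and> ennreal t < ennreal y} = {0<..<y}"
    using y by (auto simp: ennreal_less_iff)
  ultimately show ?thesis unfolding \<Phi>_def by simp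
qed

lemma Phi_0[simp]: "\<Phi> 0 = 0"
  by (simp add: \<Phi>_def)

lemma Phi_mono: "x \<le> y \<Longrightarrow> \<Phi> x \<le> \<Phi> y"
  unfolding \<Phi>_def by (intro emeasure_mono) (auto intro: less_le_trans)

lemma Phi_SUP:
  assumes "incseq X" shows "\<Phi> (SUP n. X n) = (SUP n. \<Phi> (X n))"
proof -
  have "incseq (\<lambda>n. {t. 0 < t \<and> ennreal t < X n})"
    using assms unfolding incseq_def by (auto intro: less_le_trans)
  then have "(SUP n. emeasure \<nu> {t. 0 < t \<and> ennreal t < X n}) = emeasure \<nu> (\<Union>n. {t. 0 < t \<and> ennreal t < X n})"
    by (intro SUP_emeasure_incseq) auto
  moreover have "(\<Union>n. {t. 0 < t \<and> ennreal t < X n}) = {t. 0 < t \<and> ennreal t < (SUP n. X n)}"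
    by (auto simp: less_SUP_iff)
  ultimately show ?thesis unfolding \<Phi>_def by simp
qed

lemma Phi_top: "\<Phi> top = (SUP n. ennreal (\<phi>\<^sub>0 (real n)))"
proof -
  have "(SUP n. ennreal (real n)) = top"
    using ennreal_SUP_of_nat_eq_top by (simp add: ennreal_of_nat_eq_real_of_nat)
  then have "\<Phi> top = \<Phi> (SUP n. ennreal (real n))" by (simp only:)
  also have "\<dots> = (SUP n. \<Phi> (ennreal (real n)))" by (rule Phi_SUP) (auto simp: incseq_def)
  finally show ?thesis by (simp add: Phi_ennreal)
qed

lemma Phi_eq_0_iff: "\<Phi> x = 0 \<longleftrightarrow> x = 0"
proof
  assume "\<Phi> x = 0"
  show "x = 0"
  proof (cases x)
    case (real a)
    then show ?thesis using \<open>\<Phi> x = 0\<close> phi0_pos[of a] by (auto simp: Phi_ennreal less_le ennreal_eq_0_iff)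
  next
    case top
    then have "\<Phi> 1 \<le> \<Phi> x" by (intro Phi_mono) simp
    then show ?thesis using \<open>\<Phi> x = 0\<close> phi0_pos[of 1] Phi_ennreal[of 1] by simp
  qed
qed simp

lemma Phi_less_top: "x < top \<Longrightarrow> \<Phi> x < top"
  by (cases x) (auto simp: Phi_ennreal)

end

context lorentz_weight
begin

text \<open>The Choquet integral of \<open>\<bar>u\<bar>\<close> with respect to the capacity \<open>\<phi> \<circ> lborel\<close> on \<open>(0, \<infinity>)\<close>.\<close>
definition choquet :: "(real \<Rightarrow> real) \<Rightarrow> ennreal" where
  "choquet u = (\<integral>\<^sup>+l. indicator {0<..} l * \<Phi> (distf u l) \<partial>lborel)"

lemma Phi_distf_measurable[measurable]:
  assumes [measurable]: "u \<in> borel_measurable borel"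
  shows "(\<lambda>l. \<Phi> (distf u l)) \<in> borel_measurable borel"
  by (rule antimono_borel_measurable) (intro Phi_mono distf_antimono assms)

lemma nn_integral_rearr_powr_eq_choquet:
  assumes [measurable]: "f \<in> borel_measurable borel" and "0 < r"
  shows "(\<integral>\<^sup>+t. epow (rearr f t) r \<partial>\<nu>) = choquet (\<lambda>t. \<bar>f t\<bar> powr r)"
proof -
  have [measurable]: "(\<lambda>t. epow (rearr f t) r) \<in> borel_measurable \<nu>"
    unfolding borel_measurable_nu using \<open>0 < r\<close> by (intro rearr_epow_measurable) simp
  have "emeasure \<nu> {t. ennreal l < epow (rearr f t) r} = \<Phi> (distf (\<lambda>t. \<bar>f t\<bar> powr r) l)"
    if "0 < l" for l
  proof -
    have "ennreal l < epow (rearr f t) r \<longleftrightarrow> ennreal t < distf f (l powr (1/r))" if "0 < t" for t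
      using that \<open>0 < l\<close> \<open>0 < r\<close> by (simp add: epow_less_iff rearr_less_iff)
    then have "{t. ennreal l < epow (rearr f t) r} \<inter> {0<..} = {t. 0 < t \<and> ennreal t < distf f (l powr (1/r))}"
      by auto
    moreover have "emeasure \<nu> {t. ennreal l < epow (rearr f t) r} =
        emeasure \<nu> ({t. ennreal l < epow (rearr f t) r} \<inter> {0<..})"
      by (subst emeasure_nu_restrict_pos) (auto simp: Int_def)
    ultimately show ?thesis
      using distf_powr[OF \<open>0 < r\<close> \<open>0 < l\<close>] by (simp add: \<Phi>_def)
  qed
  then show ?thesis
    unfolding choquet_def
    by (subst nn_integral_layer_cake[OF sigma_finite_nu])
       (auto intro!: nn_integral_cong split: split_indicator)
qed

lemma choquet_mono:
  assumes "\<And>l. 0 < l \<Longrightarrow> distf u l \<le> distf v l"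
  shows "choquet u \<le> choquet v"
  unfolding choquet_def
  by (intro nn_integral_mono) (auto split: split_indicator intro!: Phi_mono assms)

lemma choquet_cong:
  assumes "\<And>l. 0 < l \<Longrightarrow> distf u l = distf v l"
  shows "choquet u = choquet v"
  using assms by (intro antisym choquet_mono) auto

lemma choquet_cmult:
  assumes "0 < c" and [measurable]: "u \<in> borel_measurable borel"
  shows "choquet (\<lambda>t. c * u t) = ennreal c * choquet u"
proof -
  define G where "G l = indicator {0<..} l * \<Phi> (distf u l)" for l
  have [measurable]: "G \<in> borel_measurable borel" unfolding G_def by measurable
  have "choquet (\<lambda>t. c * u t) = (\<integral>\<^sup>+l. G (l / c) \<partial>lborel)"
    unfolding choquet_def G_def distf_cmult[OF \<open>0 < c\<close>]
    using \<open>0 < c\<close> by (intro nn_integral_cong) (auto split: split_indicator simp: field_simps)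
  also have "\<dots> = ennreal \<bar>c\<bar> * (\<integral>\<^sup>+x. G ((0 + c * x) / c) \<partial>lborel)"
    using \<open>0 < c\<close> by (intro nn_integral_real_affine) auto
  also have "\<dots> = ennreal c * choquet u"
    using \<open>0 < c\<close> unfolding choquet_def G_def by simp
  finally show ?thesis .
qed

lemma choquet_eq_0_iff:
  assumes [measurable]: "u \<in> borel_measurable borel"
  shows "choquet u = 0 \<longleftrightarrow> (AE t in lborel. 0 < t \<longrightarrow> u t = 0)"
proof
  assume "choquet u = 0"
  then have "AE l in lborel. 0 < l \<longrightarrow> distf u l = 0"
    unfolding choquet_def
    by (subst (asm) nn_integral_0_iff_AE) (auto elim!: eventually_mono simp: Phi_eq_0_iff)
  then obtain N where N: "N \<in> null_sets lborel" "\<And>l. l \<notin> N \<Longrightarrow> 0 < l \<Longrightarrow> distf u l = 0"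
    by (auto elim!: AE_E3)
  text \<open>A null set cannot contain an interval \<open>(0, l]\<close>, and \<open>distf u\<close> is antitone.\<close>
  have "distf u l = 0" if "0 < l" for l
  proof -
    have "\<not> {0<..l} \<subseteq> N"
      using N(1) \<open>0 < l\<close> emeasure_mono[of "{0<..l}" N lborel] by (auto simp: null_sets_def)
    then obtain x where "x \<in> {0<..l}" "x \<notin> N" by blast
    then show ?thesis
      using N(2)[of x] distf_antimono[OF assms, of x l] by simp
  qed
  then show "AE t in lborel. 0 < t \<longrightarrow> u t = 0"
    by (rule AE_eq_0_if_distf_eq_0[OF assms])
next
  assume "AE t in lborel. 0 < t \<longrightarrow> u t = 0"
  then show "choquet u = 0"
    unfolding choquet_def
    by (subst nn_integral_0_iff_AE) (auto simp: distf_eq_0_AE[OF assms] split: split_indicator)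
qed

lemma choquet_indicator:
  assumes [measurable]: "E \<in> sets borel" and "E \<subseteq> {0<..}"
  shows "choquet (indicator E) = \<Phi> (emeasure lborel E)"
proof -
  have "distf (indicator E) l = (if l < 1 then emeasure lborel E else 0)" if "0 < l" for l
  proof -
    have "{t\<in>{0<..}. l < \<bar>indicator E t :: real\<bar>} = (if l < 1 then E else {})"
      using assms that by (auto split: split_indicator)
    then show ?thesis unfolding distf_def by simp
  qed
  then have "choquet (indicator E) = (\<integral>\<^sup>+l. \<Phi> (emeasure lborel E) * indicator {0<..<1::real} l \<partial>lborel)"
    unfolding choquet_def by (intro nn_integral_cong) (auto split: split_indicator)
  then show ?thesis by (simp add: nn_integral_cmult)
qed

lemma choquet_monotone_convergence:
  assumes [measurable]: "\<And>n. U n \<in> borel_measurable borel" "u \<in> borel_measurable borel"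
    and lim: "AE t in lborel. 0 < t \<longrightarrow> incseq (\<lambda>n. \<bar>U n t\<bar>) \<and> (\<lambda>n. \<bar>U n t\<bar>) \<longlonglongrightarrow> \<bar>u t\<bar>"
  shows "(\<lambda>n. choquet (U n)) \<longlonglongrightarrow> choquet u"
proof -
  have mono: "distf (U n) l \<le> distf (U m) l" if "n \<le> m" for n m l
    using lim that by (intro distf_mono_AE) (auto elim!: eventually_mono simp: incseq_def)
  then have integrand_mono: "incseq (\<lambda>n l. indicator {0<..} l * \<Phi> (distf (U n) l))"
    unfolding incseq_def le_fun_def by (auto intro!: mult_left_mono Phi_mono)
  have "\<Phi> (distf u l) = (SUP n. \<Phi> (distf (U n) l))" for l
    unfolding distf_incseq_limit[OF assms] by (rule Phi_SUP) (auto simp: incseq_def mono)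
  then have "choquet u = (\<integral>\<^sup>+l. (SUP n. indicator {0<..} l * \<Phi> (distf (U n) l)) \<partial>lborel)"
    unfolding choquet_def by (simp add: SUP_mult_left_ennreal)
  also have "\<dots> = (SUP n. choquet (U n))"
    unfolding choquet_def by (rule nn_integral_monotone_convergence_SUP[OF integrand_mono]) measurable
  finally show ?thesis
    using integrand_mono by (simp add: LIMSEQ_SUP choquet_def incseq_def le_fun_def nn_integral_mono)
qed

end

section \<open>Subadditivity of the Choquet integral\<close>

text \<open>\<open>choquet_min s u = \<integral>\<^sub>0\<^sup>s u\<^sup>*\<close>, the Choquet integral for the weight \<open>min(\<cdot>, s)\<close>.\<close>
definition choquet_min :: "real \<Rightarrow> (real \<Rightarrow> real) \<Rightarrow> ennreal" where
  "choquet_min s u = (\<integral>\<^sup>+l. indicator {0<..} l * min (distf u l) (ennreal s) \<partial>lborel)"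

definition tail_integral :: "real \<Rightarrow> (real \<Rightarrow> real) \<Rightarrow> ennreal" where
  "tail_integral a u = (\<integral>\<^sup>+l. indicator {a<..} l * distf u l \<partial>lborel)"

lemma tail_integral_eq:
  assumes [measurable]: "u \<in> borel_measurable borel" and "0 \<le> a"
  shows "tail_integral a u = (\<integral>\<^sup>+t. indicator {0<..} t * ennreal (\<bar>u t\<bar> - a) \<partial>lborel)"
proof -
  have level_sets: "emeasure lborel {t\<in>space lborel. ennreal l < indicator {0<..} t * ennreal (\<bar>u t\<bar> - a)}
      = distf u (a + l)" if "0 < l" for l
  proof -
    have "{t\<in>space lborel. ennreal l < indicator {0<..} t * ennreal (\<bar>u t\<bar> - a)} = {t\<in>{0<..}. a + l < \<bar>u t\<bar>}"
      using that by (auto simp: ennreal_less_iff split: split_indicator)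
    then show ?thesis by (simp add: distf_def)
  qed
  have "(\<integral>\<^sup>+t. indicator {0<..} t * ennreal (\<bar>u t\<bar> - a) \<partial>lborel)
      = (\<integral>\<^sup>+l. indicator {0<..} l * distf u (a + l) \<partial>lborel)"
  proof (subst nn_integral_layer_cake[OF lborel.sigma_finite_measure_axioms], measurable, rule nn_integral_cong)
    fix l :: real
    show "indicator {0<..} l * emeasure lborel {t\<in>space lborel. ennreal l < indicator {0<..} t * ennreal (\<bar>u t\<bar> - a)}
      = indicator {0<..} l * distf u (a + l)"
      by (cases "0 < l") (simp_all only: level_sets, simp)
  qed
  also have "\<dots> = (\<integral>\<^sup>+l. indicator {a<..} (a + 1 * l) * distf u (a + 1 * l) \<partial>lborel)"
    by (intro nn_integral_cong) (auto split: split_indicator)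
  also have "\<dots> = tail_integral a u"
    unfolding tail_integral_def
    using nn_integral_real_affine[where c=1 and t=a and f="\<lambda>l. indicator {a<..} l * distf u l"] by simp
  finally show ?thesis ..
qed

lemma choquet_min_split:
  assumes [measurable]: "u \<in> borel_measurable borel" and "0 \<le> a" and "0 \<le> s"
  shows "(\<integral>\<^sup>+l. ennreal s * indicator {0<..a} l + indicator {a<..} l * distf u l \<partial>lborel)
    = ennreal (a * s) + tail_integral a u"
  using assms unfolding tail_integral_def
  by (subst nn_integral_add) (auto simp: nn_integral_cmult ennreal_mult'[symmetric] mult.commute)

lemma choquet_min_le:
  assumes [measurable]: "u \<in> borel_measurable borel" and "0 \<le> a" and "0 \<le> s"
  shows "choquet_min s u \<le> ennreal (a * s) + tail_integral a u"
proof -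
  have "choquet_min s u \<le> (\<integral>\<^sup>+l. ennreal s * indicator {0<..a} l + indicator {a<..} l * distf u l \<partial>lborel)"
    unfolding choquet_min_def by (intro nn_integral_mono) (auto split: split_indicator)
  then show ?thesis using choquet_min_split[OF assms] by simp
qed

text \<open>The level where \<open>distf u\<close> crosses \<open>s\<close>: \<open>a = u\<^sup>*(s)\<close>.\<close>
lemma distf_crossing:
  assumes [measurable]: "u \<in> borel_measurable borel" and "0 < s" and "choquet_min s u < top"
  obtains a where "0 \<le> a" "\<And>l. 0 < l \<Longrightarrow> l < a \<Longrightarrow> ennreal s < distf u l"
    "\<And>l. a < l \<Longrightarrow> distf u l \<le> ennreal s"
proof -
  define S where "S = {l. 0 \<le> l \<and> distf u l \<le> ennreal s}"
  have "S \<noteq> {}"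
  proof
    assume "S = {}"
    then have "ennreal s < distf u l" if "0 < l" for l
      using that unfolding S_def by (metis (mono_tags) empty_iff mem_Collect_eq less_imp_le not_le)
    then have "choquet_min s u = (\<integral>\<^sup>+l. ennreal s * indicator {0::real<..} l \<partial>lborel)"
      unfolding choquet_min_def by (intro nn_integral_cong) (auto split: split_indicator)
    also have "\<dots> = top"
      using \<open>0 < s\<close> by (simp add: nn_integral_cmult emeasure_lborel_Ioi_0 ennreal_mult_top)
    finally show False using \<open>choquet_min s u < top\<close> by simp
  qed
  have bdd: "bdd_below S" unfolding S_def by (intro bdd_belowI[of _ 0]) auto
  show ?thesis
  proof
    show "0 \<le> Inf S"
      using \<open>S \<noteq> {}\<close> by (intro cInf_greatest) (auto simp: S_def)
  next
    fix l assume "0 < l" "l < Inf S"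
    then show "ennreal s < distf u l"
      using cInf_lower[OF _ bdd, of l] by (force simp: S_def)
  next
    fix l assume "Inf S < l"
    then obtain l' where "l' \<in> S" "l' < l" using cInf_less_iff[OF \<open>S \<noteq> {}\<close> bdd] by auto
    then show "distf u l \<le> ennreal s"
      unfolding S_def using distf_antimono[of u l' l] by auto
  qed
qed

text \<open>The \<open>K\<close>-functional form \<open>\<integral>\<^sub>0\<^sup>s u\<^sup>* = min\<^sub>a\<^sub>\<ge>\<^sub>0 (a s + \<integral> (\<bar>u\<bar> - a)\<^sup>+)\<close>, the minimum attained at the crossing level.\<close>
lemma choquet_min_eq:
  assumes [measurable]: "u \<in> borel_measurable borel" and "0 < s" and "choquet_min s u < top"
  obtains a where "0 \<le> a" "choquet_min s u = ennreal (a * s) + tail_integral a u"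
proof -
  obtain a where a: "0 \<le> a" and below: "\<And>l. 0 < l \<Longrightarrow> l < a \<Longrightarrow> ennreal s < distf u l"
    and above: "\<And>l. a < l \<Longrightarrow> distf u l \<le> ennreal s"
    using distf_crossing[OF assms] by blast
  have "AE l in lborel. indicator {0<..} l * min (distf u l) (ennreal s)
      = ennreal s * indicator {0<..a} l + indicator {a<..} l * distf u l"
    using AE_lborel_singleton[of a]
  proof eventually_elim
    case (elim l)
    consider "l \<le> 0" | "0 < l" "l < a" | "a < l" using elim by fastforce
    then show ?case
    proof cases
      case 1
      then show ?thesis using a by simp
    next
      case 2
      then show ?thesis using below[of l] by (auto simp: min_def)
    next
      case 3
      then show ?thesis using above[of l] a by (simp add: min_def)
    qed
  qed
  then have "choquet_min s u = (\<integral>\<^sup>+l. ennreal s * indicator {0<..a} l + indicator {a<..} l * distf u l \<partial>lborel)"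
    unfolding choquet_min_def by (rule nn_integral_cong_AE)
  then show ?thesis
    using that a choquet_min_split[OF assms(1) a] \<open>0 < s\<close> by simp
qed

lemma choquet_min_subadditive:
  assumes [measurable]: "u \<in> borel_measurable borel" "v \<in> borel_measurable borel" and "0 < s"
  shows "choquet_min s (\<lambda>t. u t + v t) \<le> choquet_min s u + choquet_min s v"
proof (cases "choquet_min s u < top \<and> choquet_min s v < top")
  case True
  obtain a where a: "0 \<le> a" "choquet_min s u = ennreal (a * s) + tail_integral a u"
    using choquet_min_eq[OF assms(1,3)] True by blast
  obtain b where b: "0 \<le> b" "choquet_min s v = ennreal (b * s) + tail_integral b v"
    using choquet_min_eq[OF assms(2,3)] True by blast
  have tail: "tail_integral (a + b) (\<lambda>t. u t + v t) \<le> tail_integral a u + tail_integral b v"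
  proof -
    have "ennreal (\<bar>u t + v t\<bar> - (a + b)) \<le> ennreal (\<bar>u t\<bar> - a) + ennreal (\<bar>v t\<bar> - b)" for t
    proof -
      have "ennreal (\<bar>u t + v t\<bar> - (a + b)) \<le> ennreal (max 0 (\<bar>u t\<bar> - a) + max 0 (\<bar>v t\<bar> - b))"
        by (intro ennreal_leI) auto
      also have "\<dots> = ennreal (\<bar>u t\<bar> - a) + ennreal (\<bar>v t\<bar> - b)"
        by (subst ennreal_plus) (auto simp: ennreal_max_0)
      finally show ?thesis .
    qed
    then have "(\<integral>\<^sup>+t. indicator {0<..} t * ennreal (\<bar>u t + v t\<bar> - (a + b)) \<partial>lborel)
        \<le> (\<integral>\<^sup>+t. indicator {0<..} t * ennreal (\<bar>u t\<bar> - a) + indicator {0<..} t * ennreal (\<bar>v t\<bar> - b) \<partial>lborel)"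
      by (intro nn_integral_mono) (auto split: split_indicator)
    also have "\<dots> = tail_integral a u + tail_integral b v"
      using a b by (subst nn_integral_add) (auto simp: tail_integral_eq)
    finally show ?thesis
      using a b by (simp add: tail_integral_eq)
  qed
  have "choquet_min s (\<lambda>t. u t + v t) \<le> ennreal ((a + b) * s) + tail_integral (a + b) (\<lambda>t. u t + v t)"
    using a b \<open>0 < s\<close> by (intro choquet_min_le) auto
  also have "\<dots> \<le> ennreal ((a + b) * s) + (tail_integral a u + tail_integral b v)"
    using tail by (rule add_left_mono)
  also have "\<dots> = choquet_min s u + choquet_min s v"
    using a b \<open>0 < s\<close> by (simp add: distrib_right ennreal_plus[symmetric] add_ac del: ennreal_plus)
  finally show ?thesis .
qed (auto simp: less_top[symmetric])

lemma summation_by_parts: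
  fixes \<sigma> m :: "nat \<Rightarrow> real"
  assumes "m 0 = 0"
  shows "(\<Sum>k<N. \<sigma> k * (m (Suc k) - m k)) = (\<Sum>k<N. (\<sigma> k - \<sigma> (Suc k)) * m (Suc k)) + \<sigma> N * m N"
  using assms by (induction N) (simp_all add: algebra_simps)

context lorentz_weight
begin

lemma phi_scale_ge:
  assumes "0 < t" "t \<le> 1" and "0 < y"
  shows "t * \<phi> y \<le> \<phi> (t * y)"
proof -
  have "isCont \<phi> (t * y)"
    using continuous_on_phi assms by (simp add: continuous_on_eq_continuous_at)
  moreover have "((\<lambda>e. (1 - t) * e + t * y) \<longlongrightarrow> (1 - t) * 0 + t * y) (at_right 0)"
    by (intro tendsto_intros)
  ultimately have "((\<lambda>e. \<phi> ((1 - t) * e + t * y)) \<longlongrightarrow> \<phi> (t * y)) (at_right 0)"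
    using isCont_tendsto_compose by fastforce
  moreover have "((\<lambda>e. (1 - t) * \<phi> e + t * \<phi> y) \<longlongrightarrow> (1 - t) * 0 + t * \<phi> y) (at_right 0)"
    by (intro tendsto_intros tendsto_0)
  moreover have "(1 - t) * \<phi> e + t * \<phi> y \<le> \<phi> ((1 - t) * e + t * y)" if "0 < e" for e
    using concave_onD[OF concave, of t e y] assms that by (simp add: algebra_simps)
  then have "\<forall>\<^sub>F e in at_right 0. (1 - t) * \<phi> e + t * \<phi> y \<le> \<phi> ((1 - t) * e + t * y)"
    unfolding eventually_at_right_field by (intro exI[of _ 1]) auto
  ultimately have "(1 - t) * 0 + t * \<phi> y \<le> \<phi> (t * y)"
    by (intro tendsto_le[of "at_right 0"]) auto
  then show ?thesis by simp
qed

lemma concave_on_phi0: "concave_on {0..} \<phi>\<^sub>0"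
proof (rule concave_on_linorderI)
  fix t x y :: real assume t: "0 < t" "t < 1" and "x \<in> {0..}" "y \<in> {0..}" "x < y"
  then have "0 \<le> x" "0 < y" by auto
  show "(1 - t) * \<phi>\<^sub>0 x + t * \<phi>\<^sub>0 y \<le> \<phi>\<^sub>0 ((1 - t) *\<^sub>R x + t *\<^sub>R y)"
  proof (cases "x = 0")
    case True
    moreover have "0 < t * y" using t \<open>0 < y\<close> by simp
    ultimately show ?thesis
      using phi_scale_ge[of t y] t \<open>0 < y\<close> by (simp add: \<phi>\<^sub>0_def not_le[symmetric])
  next
    case False
    with \<open>0 \<le> x\<close> have "0 < x" by simp
    moreover have "0 < (1 - t) * x + t * y"
      using t \<open>0 < x\<close> \<open>0 < y\<close> by (intro add_pos_pos) auto
    ultimately show ?thesis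
      using concave_onD[OF concave, of t x y] t \<open>0 < y\<close> by (simp add: \<phi>\<^sub>0_def)
  qed
qed simp

lemma phi0_chord:
  assumes "0 \<le> a" "a < c" "a \<le> b" "b \<le> c"
  shows "(\<phi>\<^sub>0 c - \<phi>\<^sub>0 a) / (c - a) * (b - a) + \<phi>\<^sub>0 a \<le> \<phi>\<^sub>0 b"
proof -
  have "concave_on {a..c} \<phi>\<^sub>0"
    using concave_on_phi0 unfolding concave_on_def by (rule convex_on_subset) (use assms in auto)
  from concave_onD_Icc'[OF this, of b] assms show ?thesis by simp
qed

lemma phi0_midpoint:
  assumes "0 \<le> a" "0 \<le> h"
  shows "\<phi>\<^sub>0 a + \<phi>\<^sub>0 (a + 2 * h) \<le> 2 * \<phi>\<^sub>0 (a + h)"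
  using concave_onD[OF concave_on_phi0, of "1/2" a "a + 2 * h"] assms by (simp add: algebra_simps)

text \<open>The \<open>n\<close>-th approximation of \<open>\<phi>\<^sub>0\<close>: linear interpolation at the nodes \<open>k/(n+1)\<close>,
  \<open>k \<le> (n+1)\<^sup>2\<close>, and constant beyond the last node \<open>n+1\<close>.\<close>
definition mesh :: "nat \<Rightarrow> real" where "mesh n = 1 / real (Suc n)"
definition nodes :: "nat \<Rightarrow> nat" where "nodes n = (Suc n)\<^sup>2"
definition node :: "nat \<Rightarrow> nat \<Rightarrow> real" where "node n k = real k * mesh n"
definition slope :: "nat \<Rightarrow> nat \<Rightarrow> real" where
  "slope n k = (\<phi>\<^sub>0 (node n (Suc k)) - \<phi>\<^sub>0 (node n k)) / mesh n"
definition interp :: "nat \<Rightarrow> real \<Rightarrow> real" where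
  "interp n y = (\<Sum>k<nodes n. slope n k * (min y (node n (Suc k)) - min y (node n k)))"

lemma mesh_pos: "0 < mesh n"
  by (simp add: mesh_def)

lemma node_nonneg: "0 \<le> node n k"
  by (simp add: node_def mesh_def)

lemma node_pos: "0 < k \<Longrightarrow> 0 < node n k"
  by (simp add: node_def mesh_def)

lemma node_Suc: "node n (Suc k) = node n k + mesh n"
  by (simp add: node_def algebra_simps)

lemma node_mono: "k \<le> j \<Longrightarrow> node n k \<le> node n j"
  by (simp add: node_def mesh_def divide_right_mono)

lemma node_0[simp]: "node n 0 = 0"
  by (simp add: node_def)

lemma node_nodes: "node n (nodes n) = real (Suc n)"
proof -
  have "real (Suc n) * real (Suc n) * (1 / real (Suc n)) = real (Suc n)" by simp
  then show ?thesis
    unfolding node_def mesh_def nodes_def by (simp only: of_nat_power power2_eq_square of_nat_mult)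
qed

lemma slope_nonneg: "0 \<le> slope n k"
  unfolding slope_def using mesh_pos[of n] phi0_mono[OF node_mono[of k "Suc k" n]]
  by (intro divide_nonneg_pos) auto

lemma slope_antimono: "slope n (Suc k) \<le> slope n k"
proof -
  have "\<phi>\<^sub>0 (node n k) + \<phi>\<^sub>0 (node n k + 2 * mesh n) \<le> 2 * \<phi>\<^sub>0 (node n k + mesh n)"
    using node_nonneg mesh_pos by (intro phi0_midpoint) (auto intro: less_imp_le)
  then show ?thesis
    unfolding slope_def using mesh_pos[of n]
    by (simp add: node_Suc divide_right_mono algebra_simps)
qed

lemma interp_le_phi0:
  assumes "0 \<le> y" shows "interp n y \<le> \<phi>\<^sub>0 y"
proof -
  have "slope n k * (min y (node n (Suc k)) - min y (node n k))
      \<le> \<phi>\<^sub>0 (min y (node n (Suc k))) - \<phi>\<^sub>0 (min y (node n k))" for k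
  proof -
    consider "y \<le> node n k" | "node n (Suc k) \<le> y" | "node n k < y" "y < node n (Suc k)"
      by linarith
    then show ?thesis
    proof cases
      case 1
      then show ?thesis using node_mono[of k "Suc k" n] by simp
    next
      case 2
      then show ?thesis using node_mono[of k "Suc k" n] mesh_pos[of n] by (simp add: slope_def node_Suc)
    next
      case 3
      with phi0_chord[of "node n k" "node n (Suc k)" y] node_nonneg
      show ?thesis using mesh_pos[of n] by (simp add: slope_def node_Suc algebra_simps)
    qed
  qed
  then have "interp n y \<le> (\<Sum>k<nodes n. \<phi>\<^sub>0 (min y (node n (Suc k))) - \<phi>\<^sub>0 (min y (node n k)))"
    unfolding interp_def by (intro sum_mono)
  also have "\<dots> = \<phi>\<^sub>0 (min y (node n (nodes n)))"
    using assms by (subst sum_lessThan_telescope) (simp add: \<phi>\<^sub>0_def)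
  also have "\<dots> \<le> \<phi>\<^sub>0 y"
    by (rule phi0_mono) simp
  finally show ?thesis .
qed

lemma phi0_node_le_interp:
  assumes "J \<le> nodes n" "node n J \<le> y"
  shows "\<phi>\<^sub>0 (node n J) \<le> interp n y"
proof -
  have "\<phi>\<^sub>0 (node n J) = (\<Sum>k<J. \<phi>\<^sub>0 (node n (Suc k)) - \<phi>\<^sub>0 (node n k))"
    by (subst sum_lessThan_telescope) (simp add: \<phi>\<^sub>0_def)
  also have "\<dots> \<le> (\<Sum>k<J. slope n k * (min y (node n (Suc k)) - min y (node n k)))"
  proof (intro sum_mono)
    fix k assume "k \<in> {..<J}"
    then have "node n (Suc k) \<le> y" "node n k \<le> y"
      using node_mono[of "Suc k" J n] node_mono[of k "Suc k" n] assms by auto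
    then show "\<phi>\<^sub>0 (node n (Suc k)) - \<phi>\<^sub>0 (node n k) \<le> slope n k * (min y (node n (Suc k)) - min y (node n k))"
      using mesh_pos[of n] by (simp add: slope_def node_Suc)
  qed
  also have "\<dots> \<le> interp n y"
    unfolding interp_def using assms(1) node_mono[of _ "Suc _" n]
    by (intro sum_mono2) (auto intro!: mult_nonneg_nonneg slope_nonneg simp: min_le_iff_disj)
  finally show ?thesis .
qed

lemma phi0_le_interp:
  assumes "0 \<le> a" "a \<le> real (Suc n)"
  shows "\<phi>\<^sub>0 (a - mesh n) \<le> interp n a"
proof -
  define J where "J = nat \<lfloor>a * real (Suc n)\<rfloor>"
  have "0 \<le> a * real (Suc n)" using assms by simp
  then have J: "real J \<le> a * real (Suc n)" "a * real (Suc n) - 1 < real J"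
    unfolding J_def by (simp, linarith)
  have node_J: "node n J = real J / real (Suc n)"
    by (simp add: node_def mesh_def)
  have "real J \<le> real (Suc n) * real (Suc n)"
    using J(1) assms mult_right_mono[OF assms(2), of "real (Suc n)"] by linarith
  then have "J \<le> nodes n"
    unfolding nodes_def power2_eq_square by (simp only: of_nat_mult[symmetric] of_nat_le_iff)
  moreover have "node n J \<le> a"
    unfolding node_J using J(1) by (simp add: field_simps)
  moreover have "a - mesh n \<le> node n J"
  proof -
    have "(a * real (Suc n) - 1) / real (Suc n) \<le> real J / real (Suc n)"
      using J(2) by (intro divide_right_mono) auto
    moreover have "(a * real (Suc n) - 1) / real (Suc n) = a - mesh n"
      by (simp add: mesh_def diff_divide_distrib del: of_nat_Suc)
    ultimately show ?thesis unfolding node_J by simp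
  qed
  ultimately show ?thesis
    by (intro order_trans[OF phi0_mono phi0_node_le_interp])
qed

end

context lorentz_weight
begin

text \<open>\<open>interp n\<close> after summation by parts, extended to \<open>[0, \<infinity>]\<close>: a nonnegative combination of
  the functions \<open>min(\<cdot>, c)\<close>, so that its Choquet integral is a combination of \<open>choquet_min\<close>.\<close>
definition interp_ennreal :: "nat \<Rightarrow> ennreal \<Rightarrow> ennreal" where
  "interp_ennreal n x =
    (\<Sum>k<nodes n. ennreal (slope n k - slope n (Suc k)) * min x (ennreal (node n (Suc k))))
      + ennreal (slope n (nodes n)) * min x (ennreal (node n (nodes n)))"

lemma interp_ennreal_eq:
  "interp_ennreal n x = ennreal (interp n (enn2real (min x (ennreal (node n (nodes n))))))"
proof -
  define y where "y = enn2real (min x (ennreal (node n (nodes n))))"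
  have "0 \<le> y" unfolding y_def by simp
  have min_eq: "min x (ennreal (node n k)) = ennreal (min y (node n k))" if "k \<le> nodes n" for k
  proof -
    have "0 \<le> node n k" "node n k \<le> node n (nodes n)" "0 \<le> node n (nodes n)"
      using node_nonneg node_mono[OF that] by auto
    then show ?thesis
    proof (cases x)
      case top
      then show ?thesis
        using \<open>0 \<le> node n (nodes n)\<close> \<open>node n k \<le> node n (nodes n)\<close> by (simp add: y_def min_absorb2)
    qed (auto simp: y_def min_def ennreal_le_iff)
  qed
  have "interp_ennreal n x = (\<Sum>k<nodes n. ennreal ((slope n k - slope n (Suc k)) * min y (node n (Suc k))))
      + ennreal (slope n (nodes n) * min y (node n (nodes n)))"
    unfolding interp_ennreal_def using min_eq slope_antimono \<open>0 \<le> y\<close> node_nonneg slope_nonneg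
    by (intro arg_cong2[where f="(+)"] sum.cong) (auto simp: ennreal_mult Suc_le_eq)
  also have "\<dots> = ennreal ((\<Sum>k<nodes n. (slope n k - slope n (Suc k)) * min y (node n (Suc k)))
      + slope n (nodes n) * min y (node n (nodes n)))"
    using slope_antimono \<open>0 \<le> y\<close> node_nonneg slope_nonneg
    by (subst sum_ennreal) (auto intro!: sum_nonneg ennreal_plus[symmetric])
  also have "\<dots> = ennreal (interp n y)"
    unfolding interp_def using \<open>0 \<le> y\<close> by (subst summation_by_parts) simp_all
  finally show ?thesis unfolding y_def .
qed

lemma interp_ennreal_le_Phi: "interp_ennreal n x \<le> \<Phi> x"
proof -
  define y where "y = enn2real (min x (ennreal (node n (nodes n))))"
  have "0 \<le> y" unfolding y_def by simp
  have "ennreal y = min x (ennreal (node n (nodes n)))"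
    unfolding y_def by (cases x) (auto simp: min_def top_unique)
  then have "\<Phi> (ennreal y) \<le> \<Phi> x"
    by (intro Phi_mono) simp
  then show ?thesis
    using interp_le_phi0[OF \<open>0 \<le> y\<close>, of n]
    by (simp add: interp_ennreal_eq Phi_ennreal[OF \<open>0 \<le> y\<close>] y_def[symmetric] order_trans[OF ennreal_leI])
qed

lemma phi0_le_interp_ennreal_top: "ennreal (\<phi>\<^sub>0 (real n)) \<le> interp_ennreal n top"
proof -
  have "\<phi>\<^sub>0 (real n) \<le> \<phi>\<^sub>0 (node n (nodes n))"
    unfolding node_nodes by (intro phi0_mono) simp
  also have "\<dots> \<le> interp n (node n (nodes n))"
    by (intro phi0_node_le_interp) auto
  finally show ?thesis
    using node_nonneg by (simp add: interp_ennreal_eq ennreal_leI)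
qed

lemma phi0_le_interp_ennreal:
  assumes "0 \<le> a" "a \<le> real (Suc n)"
  shows "ennreal (\<phi>\<^sub>0 (a - mesh n)) \<le> interp_ennreal n (ennreal a)"
proof -
  have "min (ennreal a) (ennreal (node n (nodes n))) = ennreal a"
    unfolding node_nodes using assms by (intro min_absorb1 ennreal_leI)
  then show ?thesis
    using assms phi0_le_interp[OF assms] by (simp add: interp_ennreal_eq ennreal_leI)
qed

lemma Phi_le_liminf_interp_ennreal: "\<Phi> x \<le> liminf (\<lambda>n. interp_ennreal n x)"
proof (cases x)
  case top
  have "(\<lambda>n. ennreal (\<phi>\<^sub>0 (real n))) \<longlonglongrightarrow> \<Phi> x"
    unfolding top Phi_top by (intro LIMSEQ_SUP) (auto simp: incseq_def intro!: ennreal_leI phi0_mono)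
  then have "\<Phi> x = liminf (\<lambda>n. ennreal (\<phi>\<^sub>0 (real n)))"
    by (simp add: lim_imp_Liminf)
  then show ?thesis
    using top phi0_le_interp_ennreal_top by (simp add: Liminf_mono)
next
  case (real a)
  have "(\<lambda>n. a - mesh n) \<longlonglongrightarrow> a - 0"
    unfolding mesh_def by (intro tendsto_intros LIMSEQ_inverse_real_of_nat[unfolded inverse_eq_divide])
  then have "(\<lambda>n. \<phi>\<^sub>0 (a - mesh n)) \<longlonglongrightarrow> \<phi>\<^sub>0 a"
    using isCont_phi0 isCont_tendsto_compose by fastforce
  then have "(\<lambda>n. ennreal (\<phi>\<^sub>0 (a - mesh n))) \<longlonglongrightarrow> \<Phi> x"
    using real Phi_ennreal by (auto intro: tendsto_ennrealI)
  moreover obtain N :: nat where "a \<le> real N" using real_arch_simple by blast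
  then have "liminf (\<lambda>n. ennreal (\<phi>\<^sub>0 (a - mesh n))) \<le> liminf (\<lambda>n. interp_ennreal n x)"
    using real phi0_le_interp_ennreal
    by (intro Liminf_mono) (auto simp: eventually_sequentially intro!: exI[of _ N])
  ultimately show ?thesis
    by (simp add: lim_imp_Liminf)
qed

definition choquet_approx :: "nat \<Rightarrow> (real \<Rightarrow> real) \<Rightarrow> ennreal" where
  "choquet_approx n u = (\<integral>\<^sup>+l. indicator {0<..} l * interp_ennreal n (distf u l) \<partial>lborel)"

lemma choquet_approx_eq:
  assumes [measurable]: "u \<in> borel_measurable borel"
  shows "choquet_approx n u = (\<Sum>k<nodes n. ennreal (slope n k - slope n (Suc k)) * choquet_min (node n (Suc k)) u)
      + ennreal (slope n (nodes n)) * choquet_min (node n (nodes n)) u"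
proof -
  let ?m = "\<lambda>c l. indicator {0<..} l * min (distf u l) (ennreal c)"
  have "choquet_approx n u = (\<integral>\<^sup>+l. (\<Sum>k<nodes n. ennreal (slope n k - slope n (Suc k)) * ?m (node n (Suc k)) l)
      + ennreal (slope n (nodes n)) * ?m (node n (nodes n)) l \<partial>lborel)"
    unfolding choquet_approx_def interp_ennreal_def
    by (intro nn_integral_cong) (simp add: sum_distrib_left distrib_left ac_simps)
  also have "\<dots> = (\<integral>\<^sup>+l. (\<Sum>k<nodes n. ennreal (slope n k - slope n (Suc k)) * ?m (node n (Suc k)) l) \<partial>lborel)
      + (\<integral>\<^sup>+l. ennreal (slope n (nodes n)) * ?m (node n (nodes n)) l \<partial>lborel)"
    by (rule nn_integral_add) measurable
  also have "\<dots> = (\<Sum>k<nodes n. ennreal (slope n k - slope n (Suc k)) * choquet_min (node n (Suc k)) u)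
      + ennreal (slope n (nodes n)) * choquet_min (node n (nodes n)) u"
    unfolding choquet_min_def by (subst nn_integral_sum) (auto simp: nn_integral_cmult)
  finally show ?thesis .
qed

lemma choquet_approx_subadditive:
  assumes [measurable]: "u \<in> borel_measurable borel" "v \<in> borel_measurable borel"
  shows "choquet_approx n (\<lambda>t. u t + v t) \<le> choquet_approx n u + choquet_approx n v"
proof -
  have "0 < nodes n" by (simp add: nodes_def)
  then have "choquet_approx n (\<lambda>t. u t + v t)
      \<le> (\<Sum>k<nodes n. ennreal (slope n k - slope n (Suc k)) * (choquet_min (node n (Suc k)) u + choquet_min (node n (Suc k)) v))
        + ennreal (slope n (nodes n)) * (choquet_min (node n (nodes n)) u + choquet_min (node n (nodes n)) v)"
    unfolding choquet_approx_eq[OF borel_measurable_add[OF assms]]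
    by (intro add_mono sum_mono mult_left_mono choquet_min_subadditive assms node_pos) auto
  also have "\<dots> = choquet_approx n u + choquet_approx n v"
    unfolding choquet_approx_eq[OF assms(1)] choquet_approx_eq[OF assms(2)]
    by (simp add: distrib_left sum.distrib ac_simps)
  finally show ?thesis .
qed

lemma choquet_subadditive:
  assumes [measurable]: "u \<in> borel_measurable borel" "v \<in> borel_measurable borel"
  shows "choquet (\<lambda>t. u t + v t) \<le> choquet u + choquet v"
proof -
  have approx_le: "choquet_approx n w \<le> choquet w" for n w
    unfolding choquet_approx_def choquet_def
    by (intro nn_integral_mono mult_left_mono interp_ennreal_le_Phi) auto
  have "choquet (\<lambda>t. u t + v t) \<le> (\<integral>\<^sup>+l. liminf (\<lambda>n. indicator {0<..} l * interp_ennreal n (distf (\<lambda>t. u t + v t) l)) \<partial>lborel)"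
    unfolding choquet_def
    by (intro nn_integral_mono) (auto split: split_indicator intro: Phi_le_liminf_interp_ennreal)
  also have "\<dots> \<le> liminf (\<lambda>n. choquet_approx n (\<lambda>t. u t + v t))"
    unfolding choquet_approx_def
    by (rule nn_integral_liminf) (measurable, simp add: interp_ennreal_def)
  also have "\<dots> \<le> limsup (\<lambda>n. choquet_approx n (\<lambda>t. u t + v t))"
    by (rule Liminf_le_Limsup) simp
  also have "\<dots> \<le> choquet u + choquet v"
    using choquet_approx_subadditive[OF assms] approx_le
    by (intro Limsup_bounded always_eventually allI) (meson add_mono order_trans)
  finally show ?thesis .
qed

end

section \<open>The Lorentz space is a rearrangement invariant space\<close>

lemma powr_add_le_weighted:
  fixes x y \<alpha> r :: real
  assumes "1 \<le> r" and "0 < \<alpha>" "\<alpha> < 1" and "0 \<le> x" "0 \<le> y"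
  shows "(x + y) powr r \<le> \<alpha> powr (1 - r) * x powr r + (1 - \<alpha>) powr (1 - r) * y powr r"
proof -
  have one_le: "1 \<le> c powr (1 - r)" if "0 < c" "c < 1" for c :: real
  proof -
    have "1 \<le> (1 / c) powr (r - 1)" using that assms by (intro ge_one_powr_ge_zero) auto
    also have "(1 / c) powr (r - 1) = c powr (1 - r)"
      using that by (simp add: powr_divide powr_minus_divide[symmetric] powr_minus)
    finally show ?thesis .
  qed
  consider "x = 0" | "y = 0" | "0 < x" "0 < y" using assms by linarith
  then show ?thesis
  proof cases
    case 1
    then show ?thesis
      using one_le[of "1 - \<alpha>"] assms mult_right_mono[of 1 "(1 - \<alpha>) powr (1 - r)" "y powr r"] by simp
  next
    case 2
    then show ?thesis
      using one_le[of \<alpha>] assms mult_right_mono[of 1 "\<alpha> powr (1 - r)" "x powr r"] by simp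
  next
    case 3
    have "(\<lambda>x. x powr r) ((1 - (1 - \<alpha>)) *\<^sub>R (x / \<alpha>) + (1 - \<alpha>) *\<^sub>R (y / (1 - \<alpha>)))
        \<le> (1 - (1 - \<alpha>)) * (x / \<alpha>) powr r + (1 - \<alpha>) * (y / (1 - \<alpha>)) powr r"
      using 3 assms by (intro convex_onD[OF powr_convex[OF \<open>1 \<le> r\<close>]]) auto
    moreover have "(1 - (1 - \<alpha>)) *\<^sub>R (x / \<alpha>) + (1 - \<alpha>) *\<^sub>R (y / (1 - \<alpha>)) = x + y"
      using assms by simp
    moreover have "\<alpha> * (x / \<alpha>) powr r = \<alpha> powr (1 - r) * x powr r"
      using assms 3 by (simp add: powr_divide powr_diff)
    moreover have "(1 - \<alpha>) * (y / (1 - \<alpha>)) powr r = (1 - \<alpha>) powr (1 - r) * y powr r"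
      using assms 3 by (simp add: powr_divide powr_diff)
    ultimately show ?thesis by simp
  qed
qed

lemma powr_weighted_eq:
  fixes a b r :: real
  assumes "0 < a" and "0 < b"
  shows "(a / (a + b)) powr (1 - r) * a powr r + (1 - a / (a + b)) powr (1 - r) * b powr r = (a + b) powr r"
proof -
  have "(c / (a + b)) powr (1 - r) * c powr r = c / (a + b) powr (1 - r)" if "0 < c" for c
    using assms that by (simp add: powr_divide powr_add[symmetric])
  moreover have "1 - a / (a + b) = b / (a + b)" using assms by (simp add: field_simps)
  moreover have "a / (a + b) powr (1 - r) + b / (a + b) powr (1 - r) = (a + b) powr r"
    using assms powr_diff[of "a + b" 1 "1 - r"] by (simp add: add_divide_distrib[symmetric])
  ultimately show ?thesis
    using assms by simp
qed

lemma le_powr_plus: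
  fixes x p r :: real
  assumes "0 \<le> x" and "0 < p" and "1 \<le> r"
  shows "x \<le> p powr (1 - r) * x powr r + p"
proof (cases "x \<le> p")
  case False
  then have "p powr (1 - r) * p powr (r - 1) \<le> p powr (1 - r) * x powr (r - 1)"
    using assms by (intro mult_left_mono powr_mono2) auto
  then have "1 \<le> p powr (1 - r) * x powr (r - 1)"
    using assms by (simp add: powr_add[symmetric])
  then have "x \<le> x * (p powr (1 - r) * x powr (r - 1))"
    using assms mult_left_mono[of 1 _ x] by simp
  also have "\<dots> = p powr (1 - r) * x powr r"
    using False assms by (simp add: powr_add[symmetric] algebra_simps powr_mult_base)
  finally show ?thesis using assms by simp
qed (use assms in \<open>simp add: add_increasing\<close>)

lemma set_nn_integral_abs_le_powr:
  fixes f :: "'a \<Rightarrow> real"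
  assumes [measurable]: "E \<in> sets M" "f \<in> borel_measurable M" and "0 < p" "1 \<le> r"
  shows "(\<integral>\<^sup>+t\<in>E. ennreal \<bar>f t\<bar> \<partial>M)
    \<le> ennreal (p powr (1 - r)) * (\<integral>\<^sup>+t\<in>E. ennreal (\<bar>f t\<bar> powr r) \<partial>M) + ennreal p * emeasure M E"
proof -
  have "(\<integral>\<^sup>+t\<in>E. ennreal \<bar>f t\<bar> \<partial>M)
      \<le> (\<integral>\<^sup>+t. ennreal (p powr (1 - r)) * (ennreal (\<bar>f t\<bar> powr r) * indicator E t) + ennreal p * indicator E t \<partial>M)"
  proof (intro nn_integral_mono)
    fix t
    have "ennreal \<bar>f t\<bar> \<le> ennreal (p powr (1 - r) * \<bar>f t\<bar> powr r + p)"
      using le_powr_plus[of "\<bar>f t\<bar>" p r] assms by (intro ennreal_leI) auto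
    then show "ennreal \<bar>f t\<bar> * indicator E t
        \<le> ennreal (p powr (1 - r)) * (ennreal (\<bar>f t\<bar> powr r) * indicator E t) + ennreal p * indicator E t"
      using assms by (auto split: split_indicator simp: ennreal_mult[symmetric] ennreal_plus[symmetric] simp del: ennreal_plus)
  qed
  also have "\<dots> = ennreal (p powr (1 - r)) * (\<integral>\<^sup>+t\<in>E. ennreal (\<bar>f t\<bar> powr r) \<partial>M) + ennreal p * emeasure M E"
    by (subst nn_integral_add) (auto simp: nn_integral_cmult)
  finally show ?thesis .
qed

locale lorentz_space = lorentz_weight +
  fixes r :: real
  assumes one_le_r: "1 \<le> r"
begin

lemma r_pos: "0 < r"
  using one_le_r by simp

lemma lorentz_norm_eq_choquet:
  assumes "f \<in> borel_measurable borel"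
  shows "lorentz_norm \<phi> r f = epow (choquet (\<lambda>t. \<bar>f t\<bar> powr r)) (1/r)"
  unfolding lorentz_norm_def using nn_integral_rearr_powr_eq_choquet[OF assms r_pos] by simp

lemma choquet_eq_lorentz_norm_powr:
  assumes "f \<in> borel_measurable borel"
  shows "choquet (\<lambda>t. \<bar>f t\<bar> powr r) = epow (lorentz_norm \<phi> r f) r"
  unfolding lorentz_norm_eq_choquet[OF assms] using epow_epow[of "1/r"] r_pos by simp

lemma lorentz_norm_eq_0_iff:
  assumes [measurable]: "f \<in> borel_measurable borel"
  shows "lorentz_norm \<phi> r f = 0 \<longleftrightarrow> (AE t in lborel. 0 < t \<longrightarrow> f t = 0)"
  using r_pos by (simp add: lorentz_norm_eq_choquet epow_eq_0_iff choquet_eq_0_iff powr_eq_0_iff)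

lemma lorentz_norm_cmult:
  assumes [measurable]: "f \<in> borel_measurable borel"
  shows "lorentz_norm \<phi> r (\<lambda>t. c * f t) = ennreal \<bar>c\<bar> * lorentz_norm \<phi> r f"
proof (cases "c = 0")
  case True
  then show ?thesis by (simp add: lorentz_norm_eq_0_iff)
next
  case False
  have "(\<lambda>t. \<bar>c * f t\<bar> powr r) = (\<lambda>t. \<bar>c\<bar> powr r * \<bar>f t\<bar> powr r)"
    by (simp add: abs_mult powr_mult)
  then have "lorentz_norm \<phi> r (\<lambda>t. c * f t) = epow (ennreal (\<bar>c\<bar> powr r) * choquet (\<lambda>t. \<bar>f t\<bar> powr r)) (1/r)"
    using False by (simp add: lorentz_norm_eq_choquet choquet_cmult)
  also have "\<dots> = ennreal \<bar>c\<bar> * lorentz_norm \<phi> r f"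
    using r_pos by (simp add: epow_mult powr_powr lorentz_norm_eq_choquet)
  finally show ?thesis .
qed

lemma lorentz_norm_mono_AE:
  assumes [measurable]: "f \<in> borel_measurable borel" "g \<in> borel_measurable borel"
    and "AE t in lborel. 0 < t \<longrightarrow> \<bar>g t\<bar> \<le> \<bar>f t\<bar>"
  shows "lorentz_norm \<phi> r g \<le> lorentz_norm \<phi> r f"
proof -
  have "choquet (\<lambda>t. \<bar>g t\<bar> powr r) \<le> choquet (\<lambda>t. \<bar>f t\<bar> powr r)"
    using assms(3) r_pos
    by (intro choquet_mono distf_mono_AE) (auto elim!: eventually_mono intro: powr_mono2)
  then show ?thesis
    using r_pos by (simp add: lorentz_norm_eq_choquet epow_mono)
qed

lemma lorentz_norm_cong_distf:
  assumes "\<And>y. 0 \<le> y \<Longrightarrow> distf f y = distf g y"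
  shows "lorentz_norm \<phi> r f = lorentz_norm \<phi> r g"
proof -
  have "rearr f = rearr g"
    unfolding rearr_def[abs_def] using assms
    by (intro ext arg_cong[where f=Inf] image_cong refl) (auto intro!: Collect_cong)
  then show ?thesis unfolding lorentz_norm_def by simp
qed

lemma lorentz_norm_monotone_convergence:
  assumes [measurable]: "\<And>n. U n \<in> borel_measurable borel" "f \<in> borel_measurable borel"
    and lim: "AE t in lborel. 0 < t \<longrightarrow> incseq (\<lambda>n. \<bar>U n t\<bar>) \<and> (\<lambda>n. \<bar>U n t\<bar>) \<longlonglongrightarrow> \<bar>f t\<bar>"
  shows "(\<lambda>n. lorentz_norm \<phi> r (U n)) \<longlonglongrightarrow> lorentz_norm \<phi> r f"
proof -
  have "(\<lambda>n. choquet (\<lambda>t. \<bar>U n t\<bar> powr r)) \<longlonglongrightarrow> choquet (\<lambda>t. \<bar>f t\<bar> powr r)"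
  proof (rule choquet_monotone_convergence)
    show "AE t in lborel. 0 < t \<longrightarrow> incseq (\<lambda>n. \<bar>\<bar>U n t\<bar> powr r\<bar>) \<and> (\<lambda>n. \<bar>\<bar>U n t\<bar> powr r\<bar>) \<longlonglongrightarrow> \<bar>\<bar>f t\<bar> powr r\<bar>"
      using lim
    proof (eventually_elim, intro impI conjI)
      case (elim t)
      assume "0 < t"
      with elim show "incseq (\<lambda>n. \<bar>\<bar>U n t\<bar> powr r\<bar>)"
        using r_pos by (auto simp: incseq_def intro: powr_mono2)
      from elim \<open>0 < t\<close> show "(\<lambda>n. \<bar>\<bar>U n t\<bar> powr r\<bar>) \<longlonglongrightarrow> \<bar>\<bar>f t\<bar> powr r\<bar>"
        using r_pos by (auto intro: tendsto_powr')
    qed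
  qed measurable
  then show ?thesis
    using r_pos by (simp add: lorentz_norm_eq_choquet epow_tendsto)
qed

lemma lorentz_norm_add_null:
  assumes [measurable]: "f \<in> borel_measurable borel" "g \<in> borel_measurable borel"
    and "lorentz_norm \<phi> r f = 0"
  shows "lorentz_norm \<phi> r (\<lambda>t. f t + g t) = lorentz_norm \<phi> r g"
proof -
  have "AE t in lborel. 0 < t \<longrightarrow> f t = 0"
    using assms(3) by (simp add: lorentz_norm_eq_0_iff)
  then have "distf (\<lambda>t. \<bar>f t + g t\<bar> powr r) l = distf (\<lambda>t. \<bar>g t\<bar> powr r) l" for l
    by (intro distf_cong_AE) (auto elim!: eventually_mono)
  then have "choquet (\<lambda>t. \<bar>f t + g t\<bar> powr r) = choquet (\<lambda>t. \<bar>g t\<bar> powr r)"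
    by (intro choquet_cong)
  then show ?thesis
    by (simp add: lorentz_norm_eq_choquet)
qed

text \<open>For \<open>r > 1\<close> the subadditivity of \<open>choquet\<close> is transferred to the norm by convexity of \<open>x\<^sup>r\<close>,
  with weights \<open>\<alpha> = \<parallel>f\<parallel> / (\<parallel>f\<parallel> + \<parallel>g\<parallel>)\<close> and \<open>1 - \<alpha>\<close>.\<close>
lemma choquet_powr_add_le:
  assumes [measurable]: "f \<in> borel_measurable borel" "g \<in> borel_measurable borel"
    and norms: "lorentz_norm \<phi> r f = ennreal a" "0 < a" "lorentz_norm \<phi> r g = ennreal b" "0 < b"
  shows "choquet (\<lambda>t. \<bar>f t + g t\<bar> powr r) \<le> ennreal ((a + b) powr r)"
proof -
  define \<alpha> where "\<alpha> = a / (a + b)"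
  have \<alpha>: "0 < \<alpha>" "\<alpha> < 1" using norms by (auto simp: \<alpha>_def field_simps)
  have "choquet (\<lambda>t. \<bar>f t + g t\<bar> powr r)
      \<le> choquet (\<lambda>t. \<alpha> powr (1 - r) * \<bar>f t\<bar> powr r + (1 - \<alpha>) powr (1 - r) * \<bar>g t\<bar> powr r)"
  proof (intro choquet_mono distf_mono_AE always_eventually allI impI)
    fix t :: real
    have "\<bar>f t + g t\<bar> powr r \<le> (\<bar>f t\<bar> + \<bar>g t\<bar>) powr r"
      using r_pos by (intro powr_mono2) auto
    also have "\<dots> \<le> \<alpha> powr (1 - r) * \<bar>f t\<bar> powr r + (1 - \<alpha>) powr (1 - r) * \<bar>g t\<bar> powr r"
      using \<alpha> one_le_r by (intro powr_add_le_weighted) auto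
    finally show "\<bar>\<bar>f t + g t\<bar> powr r\<bar> \<le> \<bar>\<alpha> powr (1 - r) * \<bar>f t\<bar> powr r + (1 - \<alpha>) powr (1 - r) * \<bar>g t\<bar> powr r\<bar>"
      by simp
  qed measurable
  also have "\<dots> \<le> choquet (\<lambda>t. \<alpha> powr (1 - r) * \<bar>f t\<bar> powr r) + choquet (\<lambda>t. (1 - \<alpha>) powr (1 - r) * \<bar>g t\<bar> powr r)"
    by (rule choquet_subadditive) measurable
  also have "\<dots> = ennreal (\<alpha> powr (1 - r)) * ennreal (a powr r) + ennreal ((1 - \<alpha>) powr (1 - r)) * ennreal (b powr r)"
    using \<alpha> norms by (simp add: choquet_cmult choquet_eq_lorentz_norm_powr)
  also have "\<dots> = ennreal ((a + b) powr r)"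
    using powr_weighted_eq[of a b r] norms \<alpha> unfolding \<alpha>_def
    by (simp add: ennreal_mult[symmetric] ennreal_plus[symmetric] del: ennreal_plus)
  finally show ?thesis .
qed

lemma lorentz_norm_triangle:
  assumes [measurable]: "f \<in> borel_measurable borel" "g \<in> borel_measurable borel"
  shows "lorentz_norm \<phi> r (\<lambda>t. f t + g t) \<le> lorentz_norm \<phi> r f + lorentz_norm \<phi> r g"
proof -
  consider "lorentz_norm \<phi> r f = top \<or> lorentz_norm \<phi> r g = top"
    | "lorentz_norm \<phi> r f = 0" | "lorentz_norm \<phi> r g = 0"
    | a b where "lorentz_norm \<phi> r f = ennreal a" "0 < a" "lorentz_norm \<phi> r g = ennreal b" "0 < b"
    by (metis ennreal_cases ennreal_eq_0_iff not_le)
  then show ?thesis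
  proof cases
    case 2
    then show ?thesis by (simp add: lorentz_norm_add_null)
  next
    case 3
    then show ?thesis
      using lorentz_norm_add_null[of g f] by (simp add: add.commute)
  next
    case 4
    then have "lorentz_norm \<phi> r (\<lambda>t. f t + g t) \<le> epow (ennreal ((a + b) powr r)) (1/r)"
      unfolding lorentz_norm_eq_choquet[OF borel_measurable_add[OF assms]]
      using choquet_powr_add_le[OF assms 4] r_pos by (intro epow_mono) auto
    also have "\<dots> = ennreal (a + b)" using 4 r_pos by (simp add: powr_powr)
    finally show ?thesis using 4 by simp
  qed auto
qed

lemma lorentz_norm_indicator_less_top:
  assumes [measurable]: "E \<in> sets borel" and "E \<subseteq> {0<..}" and "emeasure lborel E < top"
  shows "lorentz_norm \<phi> r (indicator E) < top"
proof -
  have "(\<lambda>t. \<bar>indicator E t :: real\<bar> powr r) = indicator E"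
    by (auto split: split_indicator)
  then show ?thesis
    using assms r_pos Phi_less_top
    by (simp add: lorentz_norm_eq_choquet choquet_indicator epow_less_top_iff)
qed

end

context lorentz_weight
begin

text \<open>By concavity \<open>\<phi>\<^sub>0(b) \<ge> (b/a) \<phi>\<^sub>0(a)\<close> for \<open>b \<le> a\<close>.\<close>
lemma min_le_Phi:
  assumes "0 < a"
  shows "min (ennreal a) x \<le> ennreal (a / \<phi>\<^sub>0 a) * \<Phi> x"
proof -
  have pos: "0 < \<phi>\<^sub>0 a" using phi0_pos assms by simp
  show ?thesis
  proof (cases "ennreal a \<le> x")
    case True
    then have "ennreal (\<phi>\<^sub>0 a) \<le> \<Phi> x"
      using Phi_mono[OF True] Phi_ennreal[of a] assms by simp
    then have "ennreal (a / \<phi>\<^sub>0 a) * ennreal (\<phi>\<^sub>0 a) \<le> ennreal (a / \<phi>\<^sub>0 a) * \<Phi> x"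
      by (rule mult_left_mono) simp
    then show ?thesis
      using True pos assms by (simp add: ennreal_mult[symmetric] min_def)
  next
    case False
    then obtain b where b: "x = ennreal b" "0 \<le> b" "b < a"
      by (cases x) (auto simp: ennreal_less_iff not_le)
    have "(\<phi>\<^sub>0 a - \<phi>\<^sub>0 0) / (a - 0) * (b - 0) + \<phi>\<^sub>0 0 \<le> \<phi>\<^sub>0 b"
      using b assms by (intro phi0_chord) auto
    then have "b \<le> a / \<phi>\<^sub>0 a * \<phi>\<^sub>0 b"
      using assms pos by (simp add: \<phi>\<^sub>0_def[of 0] field_simps)
    then show ?thesis
      using b False assms pos phi0_nonneg[of b]
      by (simp add: min_def Phi_ennreal ennreal_mult[symmetric] ennreal_leI)
  qed
qed

lemma set_nn_integral_le_choquet: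
  assumes [measurable]: "E \<in> sets borel" "u \<in> borel_measurable borel"
    and "E \<subseteq> {0<..}" and "emeasure lborel E = ennreal a" and "0 < a"
  shows "(\<integral>\<^sup>+t\<in>E. ennreal \<bar>u t\<bar> \<partial>lborel) \<le> ennreal (a / \<phi>\<^sub>0 a) * choquet u"
proof -
  have level_sets: "emeasure lborel {t \<in> space lborel. ennreal l < ennreal \<bar>u t\<bar> * indicator E t}
      \<le> ennreal (a / \<phi>\<^sub>0 a) * \<Phi> (distf u l)" if "0 < l" for l
  proof -
    have "{t \<in> space lborel. ennreal l < ennreal \<bar>u t\<bar> * indicator E t} = {t\<in>E. l < \<bar>u t\<bar>}"
      using that by (auto split: split_indicator simp: ennreal_less_iff)
    moreover have "emeasure lborel {t\<in>E. l < \<bar>u t\<bar>} \<le> min (ennreal a) (distf u l)"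
      using assms unfolding distf_def by (auto intro!: emeasure_mono simp flip: assms(4))
    then have "emeasure lborel {t\<in>E. l < \<bar>u t\<bar>} \<le> ennreal (a / \<phi>\<^sub>0 a) * \<Phi> (distf u l)"
      using min_le_Phi[OF \<open>0 < a\<close>] by (rule order_trans)
    ultimately show ?thesis by simp
  qed
  then have "(\<integral>\<^sup>+t\<in>E. ennreal \<bar>u t\<bar> \<partial>lborel) \<le> (\<integral>\<^sup>+l. ennreal (a / \<phi>\<^sub>0 a) * (indicator {0<..} l * \<Phi> (distf u l)) \<partial>lborel)"
  proof (subst nn_integral_layer_cake[OF lborel.sigma_finite_measure_axioms], measurable, intro nn_integral_mono)
    fix l :: real
    show "indicator {0<..} l * emeasure lborel {t \<in> space lborel. ennreal l < ennreal \<bar>u t\<bar> * indicator E t}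
        \<le> ennreal (a / \<phi>\<^sub>0 a) * (indicator {0<..} l * \<Phi> (distf u l))"
    proof (cases "0 < l")
      case True
      then show ?thesis using level_sets[OF True] by simp
    qed simp
  qed
  also have "\<dots> = ennreal (a / \<phi>\<^sub>0 a) * choquet u"
    unfolding choquet_def by (rule nn_integral_cmult) measurable
  finally show ?thesis .
qed

end

context lorentz_space
begin

lemma set_nn_integral_le_lorentz_norm:
  assumes [measurable]: "E \<in> sets borel" "f \<in> borel_measurable borel"
    and "emeasure lborel E = ennreal a" and "0 \<le> a" and "0 < K"
    and choquet_bound: "\<And>u. u \<in> borel_measurable borel \<Longrightarrow>
      (\<integral>\<^sup>+t\<in>E. ennreal \<bar>u t\<bar> \<partial>lborel) \<le> ennreal K * choquet u"
  shows "(\<integral>\<^sup>+t\<in>E. ennreal \<bar>f t\<bar> \<partial>lborel) \<le> ennreal (K + a) * lorentz_norm \<phi> r f"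
proof -
  consider "lorentz_norm \<phi> r f = top" | "lorentz_norm \<phi> r f = 0"
    | p where "lorentz_norm \<phi> r f = ennreal p" "0 < p"
    by (metis ennreal_cases ennreal_eq_0_iff not_le)
  then show ?thesis
  proof cases
    case 1
    then show ?thesis using \<open>0 < K\<close> \<open>0 \<le> a\<close> by (simp add: ennreal_mult_top)
  next
    case 2
    then have "choquet f = 0"
      by (simp add: lorentz_norm_eq_0_iff choquet_eq_0_iff)
    then show ?thesis using choquet_bound[of f] by simp
  next
    case 3
    have "(\<integral>\<^sup>+t\<in>E. ennreal \<bar>f t\<bar> \<partial>lborel)
        \<le> ennreal (p powr (1 - r)) * (\<integral>\<^sup>+t\<in>E. ennreal (\<bar>f t\<bar> powr r) \<partial>lborel) + ennreal p * ennreal a"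
      using set_nn_integral_abs_le_powr[of E lborel f p r] 3 one_le_r assms(3) by simp
    also have "\<dots> \<le> ennreal (p powr (1 - r)) * (ennreal K * ennreal (p powr r)) + ennreal p * ennreal a"
      using choquet_bound[of "\<lambda>t. \<bar>f t\<bar> powr r"] 3
      by (intro add_mono mult_left_mono) (auto simp: choquet_eq_lorentz_norm_powr)
    also have "\<dots> = ennreal (p powr (1 - r) * (K * p powr r) + p * a)"
      using 3 \<open>0 < K\<close> \<open>0 \<le> a\<close> by (simp add: ennreal_mult)
    also have "p powr (1 - r) * (K * p powr r) + p * a = (K + a) * p"
      using 3 by (simp add: algebra_simps powr_add[symmetric])
    finally show ?thesis
      using 3 \<open>0 < K\<close> \<open>0 \<le> a\<close> by (simp add: ennreal_mult del: ennreal_plus)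
  qed
qed

lemma ri_space_lorentz_norm: "ri_space (lorentz_norm \<phi> r)"
  unfolding ri_space_def measurable_lborel2
proof (intro conjI ballI allI impI)
  fix E :: "real set" assume "E \<in> sets lborel" and E: "E \<subseteq> {0<..} \<and> emeasure lborel E < top"
  then have [measurable]: "E \<in> sets borel" by simp
  then show "lorentz_norm \<phi> r (indicator E) < top"
    using E by (intro lorentz_norm_indicator_less_top) auto
  obtain a where a: "emeasure lborel E = ennreal a" "0 \<le> a"
    using E by (cases "emeasure lborel E") auto
  show "\<exists>C. \<forall>f\<in>borel_measurable borel.
      (\<integral>\<^sup>+t\<in>E. ennreal \<bar>f t\<bar> \<partial>lborel) \<le> ennreal C * lorentz_norm \<phi> r f"
  proof (cases "a = 0")
    case True
    then have "E \<in> null_sets lborel" using a by (simp add: null_sets_def)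
    then show ?thesis by (intro exI[of _ 0]) (simp add: nn_integral_null_set)
  next
    case False
    with a E phi0_pos[of a] show ?thesis
      by (intro exI[of _ "a / \<phi>\<^sub>0 a + a"] ballI set_nn_integral_le_lorentz_norm set_nn_integral_le_choquet) auto
  qed
qed (auto intro: lorentz_norm_eq_0_iff[THEN iffD1] lorentz_norm_eq_0_iff[THEN iffD2]
  lorentz_norm_cmult lorentz_norm_triangle lorentz_norm_mono_AE lorentz_norm_monotone_convergence
  lorentz_norm_cong_distf)

end

section \<open>The Lorentz space belongs to the class \<open>\<X>\<close>\<close>

lemma distf_trunc_rearr:
  assumes [measurable]: "h \<in> borel_measurable borel" and finite: "\<And>t. 0 < t \<Longrightarrow> rearr h t < top"
    and "0 \<le> y"
  shows "distf (trunc_rearr h s) y = min (ennreal s) (distf h y)"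
proof -
  have "y < \<bar>trunc_rearr h s t\<bar> \<longleftrightarrow> t < s \<and> ennreal t < distf h y" if "0 < t" for t
  proof -
    have "y < enn2real (rearr h t) \<longleftrightarrow> ennreal y < rearr h t"
      using finite[OF that] \<open>0 \<le> y\<close> by (cases "rearr h t") (auto simp: ennreal_less_iff)
    then show ?thesis
      using that \<open>0 \<le> y\<close> rearr_less_iff[of h t y] by (auto simp: trunc_rearr_def split: split_indicator)
  qed
  then have "{t\<in>{0<..}. y < \<bar>trunc_rearr h s t\<bar>} = {t. 0 < t \<and> ennreal t < min (ennreal s) (distf h y)}"
    by (auto simp: ennreal_less_iff)
  then have "distf (trunc_rearr h s) y = emeasure lborel {t. 0 < t \<and> ennreal t < min (ennreal s) (distf h y)}"
    by (simp only: distf_def[of "trunc_rearr h s"])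
  then show ?thesis
    by (simp only: emeasure_lborel_below_ennreal)
qed

lemma rearr_trunc_rearr:
  assumes "h \<in> borel_measurable borel" and "\<And>t. 0 < t \<Longrightarrow> rearr h t < top"
    and "0 < s" and "0 \<le> t"
  shows "rearr (trunc_rearr h s) t = (if t < s then rearr h t else 0)"
proof (cases "t < s")
  case True
  then have "{y. 0 \<le> y \<and> distf (trunc_rearr h s) y \<le> ennreal t} = {y. 0 \<le> y \<and> distf h y \<le> ennreal t}"
    using assms by (auto simp: distf_trunc_rearr min_le_iff_disj ennreal_le_iff)
  then show ?thesis
    using True unfolding rearr_def by simp
next
  case False
  then have "ennreal 0 \<in> ennreal ` {y. 0 \<le> y \<and> distf (trunc_rearr h s) y \<le> ennreal t}"
    using assms by (intro imageI) (auto simp: distf_trunc_rearr min_le_iff_disj)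
  then have "rearr (trunc_rearr h s) t \<le> 0"
    unfolding rearr_def by (metis Inf_lower ennreal_0)
  then show ?thesis using False by simp
qed

lemma set_nn_integral_le_if_compl_ge:
  assumes [measurable]: "F \<in> borel_measurable M" "G \<in> borel_measurable M" "A \<in> sets M"
    and le: "(\<integral>\<^sup>+x. G x \<partial>M) \<le> (\<integral>\<^sup>+x. F x \<partial>M)" and finite: "(\<integral>\<^sup>+x. G x \<partial>M) < top"
    and compl: "AE x in M. x \<notin> A \<longrightarrow> F x \<le> G x"
  shows "(\<integral>\<^sup>+x. indicator A x * G x \<partial>M) \<le> (\<integral>\<^sup>+x. indicator A x * F x \<partial>M)"
proof -
  have split: "(\<integral>\<^sup>+x. H x \<partial>M) = (\<integral>\<^sup>+x. indicator A x * H x \<partial>M) + (\<integral>\<^sup>+x. indicator (- A) x * H x \<partial>M)"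
    if [measurable]: "H \<in> borel_measurable M" for H
    by (subst nn_integral_add[symmetric]) (auto intro!: nn_integral_cong split: split_indicator)
  have compl_le: "(\<integral>\<^sup>+x. indicator (- A) x * F x \<partial>M) \<le> (\<integral>\<^sup>+x. indicator (- A) x * G x \<partial>M)"
    using compl by (intro nn_integral_mono_AE) (auto elim!: eventually_mono split: split_indicator)
  have "(\<integral>\<^sup>+x. indicator (- A) x * G x \<partial>M) \<le> (\<integral>\<^sup>+x. G x \<partial>M)"
    by (subst split[of G]) (auto intro: add_increasing)
  then have compl_finite: "(\<integral>\<^sup>+x. indicator (- A) x * G x \<partial>M) \<noteq> top"
    using finite by (auto simp: top_unique)
  have "(\<integral>\<^sup>+x. indicator (- A) x * G x \<partial>M) + (\<integral>\<^sup>+x. indicator A x * G x \<partial>M) = (\<integral>\<^sup>+x. G x \<partial>M)"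
    by (simp add: split[of G] add.commute)
  also have "\<dots> \<le> (\<integral>\<^sup>+x. F x \<partial>M)"
    by (rule le)
  also have "\<dots> = (\<integral>\<^sup>+x. indicator A x * F x \<partial>M) + (\<integral>\<^sup>+x. indicator (- A) x * F x \<partial>M)"
    by (rule split) measurable
  also have "\<dots> \<le> (\<integral>\<^sup>+x. indicator A x * F x \<partial>M) + (\<integral>\<^sup>+x. indicator (- A) x * G x \<partial>M)"
    using compl_le by (rule add_left_mono)
  also have "\<dots> = (\<integral>\<^sup>+x. indicator (- A) x * G x \<partial>M) + (\<integral>\<^sup>+x. indicator A x * F x \<partial>M)"
    by (rule add.commute)
  finally show ?thesis
    using compl_finite by (simp add: ennreal_add_left_cancel_le)
qed

context lorentz_space
begin

lemma rearr_less_top: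
  assumes "lorentz_norm \<phi> r h < top" and "0 < t"
  shows "rearr h t < top"
proof (rule ccontr)
  assume "\<not> rearr h t < top"
  then have "top * indicator {0<..t} \<tau> \<le> epow (rearr h \<tau>) r" for \<tau>
    using rearr_antimono[of \<tau> t h] by (auto simp: top_unique less_top[symmetric] split: split_indicator)
  then have "(\<integral>\<^sup>+\<tau>. top * indicator {0<..t} \<tau> \<partial>\<nu>) \<le> (\<integral>\<^sup>+\<tau>. epow (rearr h \<tau>) r \<partial>\<nu>)"
    by (intro nn_integral_mono)
  moreover have "(\<integral>\<^sup>+\<tau>. top * indicator {0<..t} \<tau> \<partial>\<nu>) = top"
    using \<open>0 < t\<close> phi0_pos[of t] emeasure_nu_Ioc[of 0 t]
    by (simp add: nn_integral_cmult ennreal_mult_top \<phi>\<^sub>0_def)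
  ultimately show False
    using assms r_pos by (simp add: lorentz_norm_def epow_less_top_iff top_unique)
qed

lemma nn_integral_rearr_trunc_rearr:
  assumes "h \<in> borel_measurable borel" and "lorentz_norm \<phi> r h < top" and "0 < s"
  shows "(\<integral>\<^sup>+t. epow (rearr (trunc_rearr h s) t) r \<partial>\<nu>)
    = (\<integral>\<^sup>+t. indicator {0<..<s} t * epow (rearr h t) r \<partial>\<nu>)"
  using AE_nu_pos
  by (intro nn_integral_cong_AE, eventually_elim)
     (use assms rearr_trunc_rearr[OF assms(1) rearr_less_top[OF assms(2)] assms(3)] r_pos in
       \<open>auto split: split_indicator\<close>)

text \<open>Under the NP condition \<open>g\<^sup>* \<le> f\<^sup>*\<close> on \<open>(0, t\<^sub>0]\<close>, which settles \<open>s \<le> t\<^sub>0\<close>; for \<open>s > t\<^sub>0\<close>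
  the tail \<open>[s, \<infinity>)\<close> carries more of \<open>g\<close> than of \<open>f\<close>, so cutting it off favours \<open>f\<close>.\<close>
lemma lorentz_norm_trunc_rearr_mono:
  assumes [measurable]: "f \<in> borel_measurable borel" "g \<in> borel_measurable borel"
    and finite: "lorentz_norm \<phi> r f < top" "lorentz_norm \<phi> r g < top"
    and "NP f g" and le: "lorentz_norm \<phi> r g \<le> lorentz_norm \<phi> r f" and "0 < s"
  shows "lorentz_norm \<phi> r (trunc_rearr g s) \<le> lorentz_norm \<phi> r (trunc_rearr f s)"
proof -
  obtain t0 where t0: "0 < t0" "\<And>t. 0 < t \<and> t \<le> t0 \<Longrightarrow> rearr g t \<le> rearr f t"
    "\<And>t. t0 \<le> t \<Longrightarrow> rearr f t \<le> rearr g t"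
    using \<open>NP f g\<close> unfolding NP_def by blast
  define G where "G t = epow (rearr g t) r" for t
  define F where "F t = epow (rearr f t) r" for t
  have [measurable]: "G \<in> borel_measurable \<nu>" "F \<in> borel_measurable \<nu>"
    unfolding G_def F_def borel_measurable_nu using r_pos by (auto intro: rearr_epow_measurable)
  have "(\<integral>\<^sup>+t. indicator {0<..<s} t * G t \<partial>\<nu>) \<le> (\<integral>\<^sup>+t. indicator {0<..<s} t * F t \<partial>\<nu>)"
  proof (cases "s \<le> t0")
    case True
    then show ?thesis
      using t0(2) r_pos unfolding G_def F_def
      by (intro nn_integral_mono) (auto split: split_indicator intro: epow_mono)
  next
    case False
    show ?thesis
    proof (rule set_nn_integral_le_if_compl_ge)
      show "(\<integral>\<^sup>+t. G t \<partial>\<nu>) \<le> (\<integral>\<^sup>+t. F t \<partial>\<nu>)" "(\<integral>\<^sup>+t. G t \<partial>\<nu>) < top"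
        using le finite r_pos unfolding G_def F_def lorentz_norm_def
        by (simp_all add: epow_le_epow_iff epow_less_top_iff)
      show "AE t in \<nu>. t \<notin> {0<..<s} \<longrightarrow> F t \<le> G t"
        using AE_nu_pos unfolding G_def F_def
        by eventually_elim (use False t0(3) r_pos in \<open>auto intro: epow_mono\<close>)
    qed measurable
  qed
  then show ?thesis
    unfolding lorentz_norm_def nn_integral_rearr_trunc_rearr[OF assms(1,3) \<open>0 < s\<close>]
      nn_integral_rearr_trunc_rearr[OF assms(2,4) \<open>0 < s\<close>]
    using r_pos by (intro epow_mono) (auto simp: G_def F_def)
qed

lemma in_class_X_lorentz_norm: "in_class_X (lorentz_norm \<phi> r)"
  unfolding in_class_X_def measurable_lborel2
  using ri_space_lorentz_norm lorentz_norm_trunc_rearr_mono by blast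

end

section \<open>Power weights\<close>

lemma lorentz_weight_powr:
  assumes "0 < a" "a \<le> 1"
  shows "lorentz_weight (\<lambda>t::real. t powr a)"
proof
  show "strict_mono_on {0..} (\<lambda>t::real. t powr a)"
    using assms by (intro strict_mono_onI powr_less_mono2) auto
  have "((\<lambda>t::real. t powr a) \<longlongrightarrow> 0 powr a) (at_right 0)"
    using assms by (intro tendsto_powr2 tendsto_ident_at tendsto_const eventually_at_rightI[of 0 1]) auto
  then show "((\<lambda>t::real. t powr a) \<longlongrightarrow> 0) (at_right 0)"
    by simp
  have concave_pos: "concave_on {0<..} (\<lambda>x::real. x powr a)"
  proof (rule f''_le0_imp_concave)
    fix x :: real assume x: "x \<in> {0<..}"
    show "((\<lambda>x. x powr a) has_real_derivative a * x powr (a - 1)) (at x)"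
      "((\<lambda>x. a * x powr (a - 1)) has_real_derivative a * ((a - 1) * x powr (a - 1 - 1))) (at x)"
      using x by (auto intro!: derivative_eq_intros)
    show "a * ((a - 1) * x powr (a - 1 - 1)) \<le> 0"
      using assms x by (intro mult_nonneg_nonpos mult_nonpos_nonneg) auto
  qed auto
  show "concave_on {0..} (\<lambda>t::real. t powr a)"
  proof (rule concave_on_linorderI)
    fix t x y :: real assume t: "0 < t" "t < 1" and "x \<in> {0..}" "y \<in> {0..}" "x < y"
    show "(1 - t) * x powr a + t * y powr a \<le> ((1 - t) *\<^sub>R x + t *\<^sub>R y) powr a"
    proof (cases "x = 0")
      case True
      have "t * y powr a \<le> t powr a * y powr a"
        using t assms powr_mono'[of a 1 t] by (intro mult_right_mono) auto
      then show ?thesis using True t \<open>y \<in> {0..}\<close> by (simp add: powr_mult)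
    next
      case False
      then show ?thesis
        using concave_onD[OF concave_pos, of t x y] t \<open>x \<in> {0..}\<close> \<open>x < y\<close> by simp
    qed
  qed simp
qed

theorem mainTheorem15:
  fixes \<phi> :: "real \<Rightarrow> real" and r :: real
  assumes "strict_mono_on {0..} \<phi>"
    and "concave_on {0..} \<phi>"
    and "(\<phi> \<longlongrightarrow> 0) (at_right 0)"
    and "1 \<le> r"
  shows "in_class_X (lorentz_norm \<phi> r)
    \<and> (\<forall>p q::real. 1 < p \<and> 1 \<le> q \<and> q \<le> p \<longrightarrow> in_class_X (Lpq_norm p q))"
proof (intro conjI allI impI)
  interpret lorentz_space \<phi> r
    using assms by unfold_locales
  show "in_class_X (lorentz_norm \<phi> r)"
    by (rule in_class_X_lorentz_norm)
next
  fix p q :: real assume pq: "1 < p \<and> 1 \<le> q \<and> q \<le> p"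
  then interpret lorentz_weight "\<lambda>t::real. t powr (q / p)"
    by (intro lorentz_weight_powr) auto
  interpret lorentz_space "\<lambda>t::real. t powr (q / p)" q
    using pq by unfold_locales auto
  have "Lpq_norm p q = lorentz_norm (\<lambda>t. t powr (q / p)) q"
    by (simp add: Lpq_norm_def lorentz_norm_def fun_eq_iff)
  then show "in_class_X (Lpq_norm p q)"
    using in_class_X_lorentz_norm by simp
qed

end
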